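(* Consider the problem $\min_x f(x)=\frac1n\sum_{i=1}^n f_i(x)$ with $f$ $\mu$-strongly convex and unique minimizer $x^*$, run Algorithm BL1 (described in the context), and suppose the constants $H,H_1,M_1,M_2,R$ of the context satisfy the stated inequalities. (i) Suppose each $\mathcal{Q}^k$ is an unbiased compressor with parameter $\omega_{\rm M}$, $0<\eta\le1/(\omega_{\rm M}+1)$; for all $j\in[d]$ and $k\ge0$, $(z^k)_j$ is a convex combination of $\{(x^t)_j\}_{t=0}^k$; and for all $i\in[n]$, $j,l\in[d]$, $k\ge0$, $(\mathbf{L}_i^k)_{jl}$ is a convex combination of $\{h^i(\nabla^2f_i(z^t))_{jl}\}_{t=0}^k$. If $\|x^0-x^*\|^2\le\tilde c_1:=\min\left\{\frac{\mu^2}{4d^2H^2},\frac{\mu^2}{16d^4N_{\rm B}R^2M_2^2}\right\}$, then $\|z^k-x^*\|^2\le d\,\tilde c_1$ and $\mathcal{H}^k\le\frac{\mu^2}{16dN_{\rm B}R^2}$ for all $k\ge0$. (ii) Suppose each $\mathcal{Q}^k$ is a deterministic contraction compressor with parameter $\delta_{\rm M}$ and $\eta=1$, and each $\mathcal{C}_i^k$ is a deterministic contraction compressor with parameter $\delta$ and $\alpha=1$; set $(A_{\rm M},B_{\rm M}):=(\delta_{\rm M}/4,6/\delta_{\rm M}-7/2)$ and $(A,B):=(\delta/4,6/\delta-7/2)$. If $\|z^0-x^*\|^2\le\tilde c_2:=\min\left\{\frac{A_{\rm M}\mu^2}{4H^2B_{\rm M}},\frac{AA_{\rm M}\mu^2}{16N_{\rm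 B}R^2B_{\rm M}BM_1^2}\right\}$ and $\mathcal{H}^0\le\frac{A_{\rm M}\mu^2}{16N_{\rm B}R^2B_{\rm M}}$, then $\|z^k-x^*\|^2\le\tilde c_2$ and $\mathcal{H}^k\le\frac{A_{\rm M}\mu^2}{16N_{\rm B}R^2B_{\rm M}}$ for all $k\ge0$.
   Context: Compressors: a randomized map on $\mathbb{R}^{d\times d}$ (or $\mathbb{R}^d$) is unbiased with parameter $\omega\ge0$ if $\mathbb{E}\mathcal{C}(\mathbf{A})=\mathbf{A}$ and $\mathbb{E}\|\mathcal{C}(\mathbf{A})\|_{\rm F}^2\le(\omega+1)\|\mathbf{A}\|_{\rm F}^2$; a contraction compressor with parameter $\delta\in(0,1]$ if $\mathbb{E}\|\mathbf{A}-\mathcal{C}(\mathbf{A})\|_{\rm F}^2\le(1-\delta)\|\mathbf{A}\|_{\rm F}^2$; deterministic means $\mathcal{C}$ is a fixed (non-random) map. Bases: for each $i\in[n]$, $\{\mathbf{B}_i^{jl}\}_{j,l\in[d]}$ is a basis of $\mathbb{R}^{d\times d}$ and $h^i(\mathbf{A})$ is the coefficient matrix with $\mathbf{A}=\sum_{j,l}h^i(\mathbf{A})_{jl}\mathbf{B}_i^{jl}$; $N_{\rm B}:=1$ if all these bases are Frobenius-orthogonal, else $N_{\rm B}:=d^2$. Standing assumptions: for all $x,y$, $i$: $\|\nabla^2f_i(x)-\nabla^2f_i(y)\|\le H\|x-y\|$ (spectral), $\|\nabla^2f_i(x)-\nabla^2f_i(y)\|_{\rm F}\le H_1\|x-y\|$,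 $\|h^i(\nabla^2f_i(x))-h^i(\nabla^2f_i(y))\|_{\rm F}\le M_1\|x-y\|$, $\max_{j,l}|h^i(\nabla^2f_i(x))_{jl}-h^i(\nabla^2f_i(y))_{jl}|\le M_2\|x-y\|$, $\max_{j,l}\|\mathbf{B}_i^{jl}\|_{\rm F}\le R$. $[\mathbf{A}]_\mu$ is the Frobenius projection onto $\{\mathbf{A}=\mathbf{A}^\top,\mathbf{A}\succeq\mu\mathbf{I}\}$. Algorithm BL1 (parameters $\alpha,\eta\ge0$, $p\in(0,1]$): initialize $x^0=w^0=z^0$, matrices $\mathbf{L}_i^0$, $\xi^0=1$; $\mathbf{H}_i^k:=\sum_{j,l}(\mathbf{L}_i^k)_{jl}\mathbf{B}_i^{jl}$, $\mathbf{H}^k:=\frac1n\sum_i\mathbf{H}_i^k$. At iteration $k$: if $\xi^k=1$, $w^{k+1}=z^k$, $g^k=\nabla f(z^k)$; if $\xi^k=0$, $w^{k+1}=w^k$, $g^k=[\mathbf{H}^k]_\mu(z^k-w^k)+\nabla f(w^k)$. $\mathbf{L}_i^{k+1}=\mathbf{L}_i^k+\alpha\,\mathcal{C}_i^k(h^i(\nabla^2f_i(z^k))-\mathbf{L}_i^k)$; $x^{k+1}=z^k-[\mathbf{H}^k]_\mu^{-1}g^k$; $z^{k+1}=z^k+\eta\mathcal{Q}^k(x^{k+1}-z^k)$; $\xi^{k+1}\sim$ Bernoulli$(p)$. $\mathbf{L}_i^*:=h^i(\nabla^2f_i(x^* ))$, $\mathcal{H}^k:=\frac1n\sum_i\|\mathbf{L}_i^k-\mathbf{L}_i^*\|_{\rm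 F}^2$. *)

theory Defs
  imports "HOL-Probability.Probability"
begin

type_synonym 'd mat = "real^'d^'d"

definition frob :: "'d::finite mat \<Rightarrow> real" where
  "frob A = sqrt (\<Sum>i\<in>UNIV. \<Sum>j\<in>UNIV. (A$i$j)^2)"

definition frob_inner :: "'d::finite mat \<Rightarrow> 'd mat \<Rightarrow> real" where
  "frob_inner A C = (\<Sum>i\<in>UNIV. \<Sum>j\<in>UNIV. A$i$j * C$i$j)"

definition spec_norm :: "'d::finite mat \<Rightarrow> real" where
  "spec_norm A = onorm (\<lambda>v. A *v v)"

definition sym_ge :: "real \<Rightarrow> 'd::finite mat \<Rightarrow> bool" where
  "sym_ge \<mu> X \<longleftrightarrow> transpose X = X \<and> (\<forall>v. v \<bullet> ((X - \<mu> *\<^sub>R mat 1) *v v) \<ge> 0)"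

definition proj_mu :: "real \<Rightarrow> 'd::finite mat \<Rightarrow> 'd mat" where
  "proj_mu \<mu> A = (THE X. sym_ge \<mu> X \<and> (\<forall>Y. sym_ge \<mu> Y \<longrightarrow> frob (A - X) \<le> frob (A - Y)))"

definition is_mat_basis :: "('d::finite \<Rightarrow> 'd \<Rightarrow> 'd mat) \<Rightarrow> bool" where
  "is_mat_basis B \<longleftrightarrow> (\<forall>A. \<exists>!c::'d mat. A = (\<Sum>j\<in>UNIV. \<Sum>l\<in>UNIV. c$j$l *\<^sub>R B j l))"

definition coeff :: "('d::finite \<Rightarrow> 'd \<Rightarrow> 'd mat) \<Rightarrow> 'd mat \<Rightarrow> 'd mat" where
  "coeff B A = (THE c. A = (\<Sum>j\<in>UNIV. \<Sum>l\<in>UNIV. c$j$l *\<^sub>R B j l))"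

definition N_B :: "nat \<Rightarrow> (nat \<Rightarrow> 'd::finite \<Rightarrow> 'd \<Rightarrow> 'd mat) \<Rightarrow> real" where
  "N_B n B = (if \<forall>i<n. \<forall>j l j' l'. (j, l) \<noteq> (j', l') \<longrightarrow> frob_inner (B i j l) (B i j' l') = 0
              then 1 else real (CARD('d))^2)"

definition strongly_convex :: "real \<Rightarrow> (real^'d::finite \<Rightarrow> real) \<Rightarrow> bool" where
  "strongly_convex \<mu> f \<longleftrightarrow> (\<forall>x y t. 0 \<le> t \<and> t \<le> 1 \<longrightarrow>
     f (t *\<^sub>R x + (1 - t) *\<^sub>R y) \<le> t * f x + (1 - t) * f y - \<mu> / 2 * t * (1 - t) * (norm (x - y))^2)"

definition unbiased_compressor :: "real \<Rightarrow> ('a::euclidean_space \<Rightarrow> 'a pmf) \<Rightarrow> bool" where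
  "unbiased_compressor \<omega> Q \<longleftrightarrow> \<omega> \<ge> 0 \<and> (\<forall>v.
     integrable (measure_pmf (Q v)) (\<lambda>u. u) \<and> measure_pmf.expectation (Q v) (\<lambda>u. u) = v \<and>
     integrable (measure_pmf (Q v)) (\<lambda>u. (norm u)^2) \<and>
     measure_pmf.expectation (Q v) (\<lambda>u. (norm u)^2) \<le> (\<omega> + 1) * (norm v)^2)"

definition contraction_vec :: "real \<Rightarrow> ('a::euclidean_space \<Rightarrow> 'a pmf) \<Rightarrow> bool" where
  "contraction_vec \<delta> Q \<longleftrightarrow> 0 < \<delta> \<and> \<delta> \<le> 1 \<and> (\<forall>v.
     integrable (measure_pmf (Q v)) (\<lambda>u. (norm (v - u))^2) \<and>
     measure_pmf.expectation (Q v) (\<lambda>u. (norm (v - u))^2) \<le> (1 - \<delta>) * (norm v)^2)"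

definition contraction_mat :: "real \<Rightarrow> ('d::finite mat \<Rightarrow> 'd mat pmf) \<Rightarrow> bool" where
  "contraction_mat \<delta> C \<longleftrightarrow> 0 < \<delta> \<and> \<delta> \<le> 1 \<and> (\<forall>A.
     integrable (measure_pmf (C A)) (\<lambda>U. (frob (A - U))^2) \<and>
     measure_pmf.expectation (C A) (\<lambda>U. (frob (A - U))^2) \<le> (1 - \<delta>) * (frob A)^2)"

definition deterministic :: "('a \<Rightarrow> 'b pmf) \<Rightarrow> bool" where
  "deterministic Q \<longleftrightarrow> (\<exists>c. \<forall>a. Q a = return_pmf (c a))"

definition Hmat :: "nat \<Rightarrow> (nat \<Rightarrow> 'd::finite \<Rightarrow> 'd \<Rightarrow> 'd mat) \<Rightarrow> (nat \<Rightarrow> 'd mat) \<Rightarrow> 'd mat" where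
  "Hmat n B L = (1 / real n) *\<^sub>R (\<Sum>i<n. \<Sum>j\<in>UNIV. \<Sum>l\<in>UNIV. (L i)$j$l *\<^sub>R B i j l)"

definition avg_grad :: "nat \<Rightarrow> (nat \<Rightarrow> real^'d::finite \<Rightarrow> real^'d) \<Rightarrow> real^'d \<Rightarrow> real^'d" where
  "avg_grad n grad x = (1 / real n) *\<^sub>R (\<Sum>i<n. grad i x)"

text \<open>A realization (sample path) of Algorithm BL1. xi k = True encodes xi^k = 1.\<close>
definition BL1_run ::
  "nat \<Rightarrow> (nat \<Rightarrow> 'd::finite \<Rightarrow> 'd \<Rightarrow> 'd mat) \<Rightarrow> (nat \<Rightarrow> real^'d \<Rightarrow> real^'d) \<Rightarrow>
   (nat \<Rightarrow> real^'d \<Rightarrow> 'd mat) \<Rightarrow> real \<Rightarrow> real \<Rightarrow> real \<Rightarrow> real \<Rightarrow>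
   (nat \<Rightarrow> real^'d \<Rightarrow> (real^'d) pmf) \<Rightarrow> (nat \<Rightarrow> nat \<Rightarrow> 'd mat \<Rightarrow> 'd mat pmf) \<Rightarrow>
   (nat \<Rightarrow> real^'d) \<Rightarrow> (nat \<Rightarrow> real^'d) \<Rightarrow> (nat \<Rightarrow> real^'d) \<Rightarrow> (nat \<Rightarrow> nat \<Rightarrow> 'd mat) \<Rightarrow>
   (nat \<Rightarrow> bool) \<Rightarrow> (nat \<Rightarrow> real^'d) \<Rightarrow> bool" where
  "BL1_run n B grad hess \<mu> \<alpha> \<eta> p Q C x z w L \<xi> g \<longleftrightarrow>
     w 0 = x 0 \<and> z 0 = x 0 \<and> \<xi> 0 = True \<and>
     (\<forall>k.
        w (Suc k) = (if \<xi> k then z k else w k) \<and>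
        g k = (if \<xi> k then avg_grad n grad (z k)
               else proj_mu \<mu> (Hmat n B (L k)) *v (z k - w k) + avg_grad n grad (w k)) \<and>
        (\<forall>i<n. \<exists>c \<in> set_pmf (C k i (coeff (B i) (hess i (z k)) - L k i)).
                  L (Suc k) i = L k i + \<alpha> *\<^sub>R c) \<and>
        x (Suc k) = z k - matrix_inv (proj_mu \<mu> (Hmat n B (L k))) *v g k \<and>
        (\<exists>q \<in> set_pmf (Q k (x (Suc k) - z k)). z (Suc k) = z k + \<eta> *\<^sub>R q) \<and>
        \<xi> (Suc k) \<in> set_pmf (bernoulli_pmf p))"

definition Hcal :: "nat \<Rightarrow> (nat \<Rightarrow> 'd::finite mat) \<Rightarrow> (nat \<Rightarrow> 'd mat) \<Rightarrow> real" where
  "Hcal n Lk Lstar = (1 / real n) * (\<Sum>i<n. (frob (Lk i - Lstar i))^2)"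

definition convex_comb_of :: "real \<Rightarrow> nat \<Rightarrow> (nat \<Rightarrow> real) \<Rightarrow> bool" where
  "convex_comb_of y k a \<longleftrightarrow> (\<exists>c::nat \<Rightarrow> real. (\<forall>t\<le>k. c t \<ge> 0) \<and> (\<Sum>t\<le>k. c t) = 1 \<and>
      y = (\<Sum>t\<le>k. c t * a t))"

end

theory Submission
  imports Defs
begin

(* For a Newton-type step x' = y - P^-1 grad f(y) with P >= mu I, Taylor's formula with an
   H-Lipschitz Hessian gives |x' - x*| <= (|P - M*| + H |y - x*|) |y - x*| / mu, where M* is the
   Hessian of f at x*. By strong convexity M* is symmetric and >= mu I, hence a fixed point of the
   nonexpansive projection [.]_mu; so |[H^k]_mu - M*|^2 <= |H^k - M*|^2 <= N_B R^2 \<H>^k.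
   Since x^(k+1) is such a step from w^(k+1), an earlier z^t, its squared distance to x* is
   that of w^(k+1) shrunk by a factor theta as long as \<H>^k and the z^t stay in the claimed
   balls, and an induction on k closes the argument.
   In (i), theta = 1/d: the convex-combination hypotheses carry the bound from the x^t to z^k
   coordinatewise (losing the factor d) and from the z^t to L^k entrywise (through M_2).
   In (ii), theta = A_M/B_M: by Young's inequality one contractive compression step maps the
   ball of squared radius K into itself once its target lies in the ball of squared radius
   (A/B) K; this applies to z (target x^(k+1)) and to L (target h^i of the Hessian at z^k,
   through M_1). *)

section \<open>Matrices, Frobenius norm and the projection onto {X = X^T, X >= mu I}\<close>

lemma frob_eq_norm: "frob (A::'d::finite mat) = norm A"
  unfolding frob_def norm_vec_def L2_set_def
  by (simp add: real_sqrt_pow2 sum_nonneg)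

lemma frob_inner_eq_inner: "frob_inner (A::'d::finite mat) C = A \<bullet> C"
  unfolding frob_inner_def inner_vec_def by simp

lemma power2_norm_vec_eq_sum:
  "(norm (v::'a::real_normed_vector^'d::finite))^2 = (\<Sum>j\<in>UNIV. (norm (v $ j))^2)"
  unfolding norm_vec_def L2_set_def by (simp add: sum_nonneg)

lemma power2_norm_mat_eq_sum: "(norm (A::'d::finite mat))^2 = (\<Sum>j\<in>UNIV. \<Sum>l\<in>UNIV. (A $ j $ l)^2)"
  using frob_eq_norm[of A] unfolding frob_def
  by (metis (no_types, lifting) real_sqrt_pow2 sum_nonneg zero_le_power2)

lemma norm_matrix_vector_mult_le: "norm ((A::'d::finite mat) *v v) \<le> norm A * norm v"
proof -
  have "(norm (A *v v))^2 \<le> (\<Sum>i\<in>UNIV. (norm (A $ i))^2 * (norm v)^2)"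
    unfolding power2_norm_vec_eq_sum[of "A *v v"] real_norm_def power2_abs
  proof (rule sum_mono)
    fix i
    have "\<bar>(A *v v) $ i\<bar> \<le> norm (A $ i) * norm v"
      by (simp add: matrix_mult_dot Cauchy_Schwarz_ineq2)
    then show "((A *v v) $ i)^2 \<le> (norm (A $ i))^2 * (norm v)^2"
      by (metis abs_ge_zero power2_abs power_mono power_mult_distrib)
  qed
  also have "\<dots> = (norm A * norm v)^2"
    by (simp add: power_mult_distrib sum_distrib_right[symmetric] power2_norm_vec_eq_sum[of A])
  finally show ?thesis
    by (rule power2_le_imp_le) simp
qed

lemma norm_matrix_vector_mult_le_spec_norm: "norm ((A::'d::finite mat) *v v) \<le> spec_norm A * norm v"
  unfolding spec_norm_def by (rule onorm) simp

lemma sum_matrix_vector_mult: "(\<Sum>i\<in>S. (A i :: 'd::finite mat)) *v v = (\<Sum>i\<in>S. A i *v v)"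
  by (induction S rule: infinite_finite_induct) (auto simp: matrix_vector_mult_add_rdistrib)

lemma inner_matrix_vector_mult_axis: "(A::'d::finite mat) $ i $ j = axis i 1 \<bullet> (A *v axis j 1)"
  by (simp add: inner_axis' matrix_vector_mult_basis column_def)

lemma sym_ge_iff_quadratic_form:
  "sym_ge \<mu> (X::'d::finite mat) \<longleftrightarrow> transpose X = X \<and> (\<forall>v. \<mu> * (norm v)^2 \<le> v \<bullet> (X *v v))"
proof -
  have "v \<bullet> ((X - \<mu> *\<^sub>R mat 1) *v v) = v \<bullet> (X *v v) - \<mu> * (norm v)^2" for v
    by (simp add: matrix_vector_mult_diff_rdistrib inner_diff_right power2_norm_eq_inner
        scaleR_matrix_vector_assoc[symmetric])
  then show ?thesis
    unfolding sym_ge_def by auto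
qed

lemma sym_ge_norm_matrix_vector_mult:
  assumes "sym_ge \<mu> (X::'d::finite mat)"
  shows "\<mu> * norm v \<le> norm (X *v v)"
proof (cases "v = 0")
  case False
  have "\<mu> * (norm v)^2 \<le> v \<bullet> (X *v v)"
    using assms by (simp add: sym_ge_iff_quadratic_form)
  also have "\<dots> \<le> norm v * norm (X *v v)"
    by (rule norm_cauchy_schwarz)
  finally show ?thesis
    using False by (simp add: power2_eq_square mult.assoc)
qed simp

lemma sym_ge_invertible:
  assumes "sym_ge \<mu> (X::'d::finite mat)" "\<mu> > 0"
  shows "invertible X"
proof -
  have "inj ((*v) X)"
  proof (rule injI)
    fix a b
    assume "X *v a = X *v b"
    then have "\<mu> * norm (a - b) \<le> 0"
      using sym_ge_norm_matrix_vector_mult[OF assms(1), of "a - b"]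
      by (simp add: matrix_vector_mult_diff_distrib)
    then show "a = b"
      using assms(2) by (simp add: mult_le_0_iff)
  qed
  then show ?thesis
    using invertible_left_inverse matrix_left_invertible_injective by blast
qed

lemma matrix_inv_sym_ge:
  assumes "sym_ge \<mu> (X::'d::finite mat)" "\<mu> > 0"
  shows "matrix_inv X ** X = mat 1" and "X ** matrix_inv X = mat 1"
  using someI_ex[OF sym_ge_invertible[OF assms, unfolded invertible_def]]
  unfolding matrix_inv_def by auto

lemma norm_matrix_inv_sym_ge_le:
  assumes "sym_ge \<mu> (X::'d::finite mat)" "\<mu> > 0"
  shows "norm (matrix_inv X *v u) \<le> norm u / \<mu>"
proof -
  have "X *v (matrix_inv X *v u) = u"
    by (simp add: matrix_vector_mul_assoc matrix_inv_sym_ge(2)[OF assms])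
  then have "\<mu> * norm (matrix_inv X *v u) \<le> norm u"
    using sym_ge_norm_matrix_vector_mult[OF assms(1)] by metis
  then show ?thesis
    using assms(2) by (simp add: field_simps)
qed

definition sym_ge_set :: "real \<Rightarrow> 'd::finite mat set" where
  "sym_ge_set \<mu> = {X. sym_ge \<mu> X}"

lemma closed_sym_ge_set: "closed (sym_ge_set \<mu> :: 'd::finite mat set)"
proof -
  have eq: "sym_ge_set \<mu> = (\<Inter>i j. {X. X $ i $ j = X $ j $ i}) \<inter>
      (\<Inter>v. {X. v \<bullet> ((X - \<mu> *\<^sub>R mat 1) *v v) \<ge> 0})"
    unfolding sym_ge_set_def sym_ge_def by (auto simp: transpose_def vec_eq_iff)
  have "closed {X::'d mat. X $ i $ j = X $ j $ i}" for i j
    by (rule closed_Collect_eq) (intro continuous_intros)+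
  moreover have "closed {X::'d mat. v \<bullet> ((X - \<mu> *\<^sub>R mat 1) *v v) \<ge> 0}" for v
    by (rule closed_Collect_le)
      (auto simp: inner_vec_def matrix_vector_mult_def intro!: continuous_intros)
  ultimately show ?thesis
    unfolding eq by (intro closed_Int closed_INT ballI)
qed

lemma convex_sym_ge_set: "convex (sym_ge_set \<mu> :: 'd::finite mat set)"
proof (rule convexI)
  fix X Y :: "'d::finite mat" and u v :: real
  assume "X \<in> sym_ge_set \<mu>" "Y \<in> sym_ge_set \<mu>" and uv: "0 \<le> u" "0 \<le> v" "u + v = 1"
  then have X: "transpose X = X" "\<And>w. \<mu> * (norm w)^2 \<le> w \<bullet> (X *v w)"
    and Y: "transpose Y = Y" "\<And>w. \<mu> * (norm w)^2 \<le> w \<bullet> (Y *v w)"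
    unfolding sym_ge_set_def sym_ge_iff_quadratic_form by auto
  have "\<mu> * (norm w)^2 \<le> w \<bullet> ((u *\<^sub>R X + v *\<^sub>R Y) *v w)" for w
  proof -
    have "\<mu> * (norm w)^2 = u * (\<mu> * (norm w)^2) + v * (\<mu> * (norm w)^2)"
      using uv by algebra
    also have "\<dots> \<le> u * (w \<bullet> (X *v w)) + v * (w \<bullet> (Y *v w))"
      using uv X(2) Y(2) by (intro add_mono mult_left_mono) auto
    also have "\<dots> = w \<bullet> ((u *\<^sub>R X + v *\<^sub>R Y) *v w)"
      by (simp add: matrix_vector_mult_add_rdistrib inner_add_right
          scaleR_matrix_vector_assoc[symmetric])
    finally show ?thesis .
  qed
  moreover have "transpose (u *\<^sub>R X + v *\<^sub>R Y) = u *\<^sub>R X + v *\<^sub>R Y"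
    using X(1) Y(1) by (simp add: transpose_def vec_eq_iff)
  ultimately show "u *\<^sub>R X + v *\<^sub>R Y \<in> sym_ge_set \<mu>"
    unfolding sym_ge_set_def sym_ge_iff_quadratic_form by auto
qed

lemma sym_ge_set_nonempty: "sym_ge_set \<mu> \<noteq> ({} :: 'd::finite mat set)"
proof -
  have "\<mu> *\<^sub>R mat 1 \<in> (sym_ge_set \<mu> :: 'd mat set)"
    unfolding sym_ge_set_def sym_ge_def by (simp add: transpose_def vec_eq_iff mat_def)
  then show ?thesis
    by blast
qed

lemma proj_mu_eq_closest_point: "proj_mu \<mu> A = closest_point (sym_ge_set \<mu>) (A::'d::finite mat)"
  unfolding proj_mu_def
proof (rule the_equality)
  let ?P = "closest_point (sym_ge_set \<mu>) A"
  have "?P \<in> sym_ge_set \<mu>" and "\<forall>Y\<in>sym_ge_set \<mu>. dist A ?P \<le> dist A Y"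
    using closest_point_in_set[OF closed_sym_ge_set sym_ge_set_nonempty]
      closest_point_le[OF closed_sym_ge_set] by auto
  then show "sym_ge \<mu> ?P \<and> (\<forall>Y. sym_ge \<mu> Y \<longrightarrow> frob (A - ?P) \<le> frob (A - Y))"
    unfolding sym_ge_set_def frob_eq_norm dist_norm by auto
next
  fix X
  assume "sym_ge \<mu> X \<and> (\<forall>Y. sym_ge \<mu> Y \<longrightarrow> frob (A - X) \<le> frob (A - Y))"
  then have "X \<in> sym_ge_set \<mu>" and "\<forall>Y\<in>sym_ge_set \<mu>. dist A X \<le> dist A Y"
    unfolding sym_ge_set_def frob_eq_norm dist_norm by auto
  then show "X = closest_point (sym_ge_set \<mu>) A"
    by (rule closest_point_unique[OF convex_sym_ge_set closed_sym_ge_set])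
qed

lemma sym_ge_proj_mu: "sym_ge \<mu> (proj_mu \<mu> (A::'d::finite mat))"
  using closest_point_in_set[OF closed_sym_ge_set sym_ge_set_nonempty]
  unfolding proj_mu_eq_closest_point sym_ge_set_def by auto

lemma proj_mu_nonexpansive:
  assumes "sym_ge \<mu> (X::'d::finite mat)"
  shows "norm (proj_mu \<mu> A - X) \<le> norm (A - X)"
proof -
  have "X \<in> sym_ge_set \<mu>"
    using assms unfolding sym_ge_set_def by simp
  then have "closest_point (sym_ge_set \<mu>) X = X"
    by (rule closest_point_self)
  then show ?thesis
    using closest_point_lipschitz[OF convex_sym_ge_set[of \<mu>] closed_sym_ge_set sym_ge_set_nonempty,
        where x=A and y=X]
    by (simp add: proj_mu_eq_closest_point dist_norm)
qed

lemma newton_step_error: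
  fixes G :: "real^'d::finite \<Rightarrow> real^'d"
  assumes P: "sym_ge \<mu> P" and \<mu>: "\<mu> > 0"
    and taylor: "norm (G y - M *v (y - xs)) \<le> H * (norm (y - xs))^2"
  shows "norm (y - matrix_inv P *v G y - xs) \<le> (norm (P - M) + H * norm (y - xs)) * norm (y - xs) / \<mu>"
proof -
  let ?e = "y - xs"
  have split: "(P - M) *v ?e - (G y - M *v ?e) = P *v ?e - G y"
    by (simp add: matrix_vector_mult_diff_rdistrib)
  have "y - matrix_inv P *v G y - xs = matrix_inv P *v ((P - M) *v ?e - (G y - M *v ?e))"
    unfolding split
    by (simp add: matrix_vector_mult_diff_distrib matrix_vector_mul_assoc
        matrix_inv_sym_ge(1)[OF P \<mu>])
  also have "norm \<dots> \<le> norm ((P - M) *v ?e - (G y - M *v ?e)) / \<mu>"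
    by (rule norm_matrix_inv_sym_ge_le[OF P \<mu>])
  also have "\<dots> \<le> (norm ((P - M) *v ?e) + norm (G y - M *v ?e)) / \<mu>"
    using \<mu> by (intro divide_right_mono norm_triangle_ineq4) simp
  also have "\<dots> \<le> (norm (P - M) * norm ?e + H * (norm ?e)^2) / \<mu>"
    using \<mu> by (intro divide_right_mono add_mono norm_matrix_vector_mult_le taylor) simp
  finally show ?thesis
    by (simp add: power2_eq_square algebra_simps)
qed

lemma projected_newton_step_error_sq:
  fixes G :: "real^'d::finite \<Rightarrow> real^'d"
  assumes M: "sym_ge \<mu> M" and \<mu>: "\<mu> > 0"
    and taylor: "norm (G y - M *v (y - xs)) \<le> H * (norm (y - xs))^2"
  shows "(norm (y - matrix_inv (proj_mu \<mu> A) *v G y - xs))^2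
           \<le> 2 * ((norm (A - M))^2 + H^2 * (norm (y - xs))^2) * (norm (y - xs))^2 / \<mu>^2"
proof -
  let ?r = "norm (y - xs)" and ?e = "norm (A - M)"
  have "norm (y - matrix_inv (proj_mu \<mu> A) *v G y - xs) \<le> (norm (proj_mu \<mu> A - M) + H * ?r) * ?r / \<mu>"
    using newton_step_error[OF sym_ge_proj_mu \<mu>, where G=G and y=y and M=M] taylor .
  also have "\<dots> \<le> (?e + H * ?r) * ?r / \<mu>"
    using proj_mu_nonexpansive[OF M] \<mu> by (intro divide_right_mono mult_right_mono) auto
  finally have "(norm (y - matrix_inv (proj_mu \<mu> A) *v G y - xs))^2 \<le> ((?e + H * ?r) * ?r / \<mu>)^2"
    by (intro power_mono) simp_all
  also have "\<dots> = (?e + H * ?r)^2 * ?r^2 / \<mu>^2"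
    by (simp add: power_mult_distrib power_divide)
  also have "\<dots> \<le> 2 * (?e^2 + H^2 * ?r^2) * ?r^2 / \<mu>^2"
  proof -
    have "(?e + H * ?r)^2 \<le> 2 * (?e^2 + H^2 * ?r^2)"
      using zero_le_power2[of "?e - H * ?r"] by (simp add: power2_eq_square algebra_simps)
    then show ?thesis
      by (intro divide_right_mono mult_right_mono) simp_all
  qed
  finally show ?thesis .
qed

section \<open>Functions with Lipschitz Hessian\<close>

lemma le_of_le_add_mult_small:
  fixes a b c :: real
  assumes "c \<ge> 0" and small: "\<And>t. 0 < t \<Longrightarrow> t < 1 \<Longrightarrow> a \<le> b + t * c"
  shows "a \<le> b"
proof (rule field_le_epsilon)
  fix e :: real
  assume "e > 0"
  define t where "t = min (1/2) (e / (c + 1))"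
  have t: "0 < t" "t < 1"
    using \<open>e > 0\<close> assms(1) by (auto simp: t_def)
  have "t * c \<le> e / (c + 1) * c"
    using assms(1) by (intro mult_right_mono) (auto simp: t_def)
  also have "\<dots> \<le> e"
    using \<open>e > 0\<close> assms(1) by (simp add: field_simps)
  finally show "a \<le> b + e"
    using small[OF t] by linarith
qed

lemma affine_approx_of_deriv_bound:
  fixes \<phi> \<phi>' :: "real \<Rightarrow> real"
  assumes "s \<ge> 0"
    and deriv: "\<And>\<sigma>. 0 \<le> \<sigma> \<Longrightarrow> \<sigma> \<le> s \<Longrightarrow> (\<phi> has_derivative (\<lambda>h. h * \<phi>' \<sigma>)) (at \<sigma>)"
    and bound: "\<And>\<sigma>. 0 \<le> \<sigma> \<Longrightarrow> \<sigma> \<le> s \<Longrightarrow> \<bar>\<phi>' \<sigma> - c\<bar> \<le> B"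
  shows "\<bar>\<phi> s - \<phi> 0 - s * c\<bar> \<le> B * s"
proof -
  have "norm ((\<lambda>\<sigma>. \<phi> \<sigma> - \<sigma> * c) s - (\<lambda>\<sigma>. \<phi> \<sigma> - \<sigma> * c) 0) \<le> B * norm (s - 0)"
  proof (rule differentiable_bound[where S="{0..s}" and f'="\<lambda>\<sigma> h. h * (\<phi>' \<sigma> - c)"])
    fix \<sigma>
    assume \<sigma>: "\<sigma> \<in> {0..s}"
    have "((\<lambda>\<sigma>. \<phi> \<sigma> - \<sigma> * c) has_derivative (\<lambda>h. h * \<phi>' \<sigma> - h * c)) (at \<sigma> within {0..s})"
      using \<sigma> by (intro has_derivative_diff has_derivative_at_withinI[OF deriv] derivative_intros) auto
    then show "((\<lambda>\<sigma>. \<phi> \<sigma> - \<sigma> * c) has_derivative (\<lambda>h. h * (\<phi>' \<sigma> - c))) (at \<sigma> within {0..s})"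
      by (simp add: right_diff_distrib)
    show "onorm (\<lambda>h. h * (\<phi>' \<sigma> - c)) \<le> B"
    proof (rule onorm_le)
      fix h
      have "\<bar>\<phi>' \<sigma> - c\<bar> \<le> B"
        using bound \<sigma> by auto
      then show "norm (h * (\<phi>' \<sigma> - c)) \<le> B * norm h"
        by (simp add: abs_mult) (metis abs_ge_zero mult.commute mult_left_mono)
    qed
  qed (use assms(1) in auto)
  then show ?thesis
    using assms(1) by (simp add: algebra_simps)
qed

locale lipschitz_hessian =
  fixes F :: "real^'d::finite \<Rightarrow> real" and G :: "real^'d \<Rightarrow> real^'d"
    and M :: "real^'d \<Rightarrow> 'd mat" and H :: real
  assumes has_derivative_F: "\<And>x. (F has_derivative (\<lambda>v. G x \<bullet> v)) (at x)"
    and has_derivative_G: "\<And>x. (G has_derivative (\<lambda>v. M x *v v)) (at x)"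
    and hessian_lipschitz: "\<And>a b v. norm ((M a - M b) *v v) \<le> H * norm (a - b) * norm v"
    and H_nonneg: "H \<ge> 0"
begin

lemma taylor_gradient: "norm (G y - G u - M u *v (y - u)) \<le> H * (norm (y - u))^2"
proof -
  let ?g = "\<lambda>x. G x - M u *v x"
  have "norm (?g y - ?g u) \<le> (H * norm (y - u)) * norm (y - u)"
  proof (rule differentiable_bound[where S="closed_segment u y" and f'="\<lambda>x v. (M x - M u) *v v"])
    fix x
    assume x: "x \<in> closed_segment u y"
    have "(?g has_derivative (\<lambda>v. M x *v v - M u *v v)) (at x)"
      by (intro has_derivative_diff has_derivative_G) (simp add: linear_imp_has_derivative)
    then show "(?g has_derivative (\<lambda>v. (M x - M u) *v v)) (at x within closed_segment u y)"
      by (simp add: matrix_vector_mult_diff_rdistrib has_derivative_at_withinI)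
    have "norm ((M x - M u) *v v) \<le> H * norm (y - u) * norm v" for v
      using hessian_lipschitz[of x u v] segment_bound(1)[OF x] H_nonneg
      by (meson mult_left_mono mult_right_mono norm_ge_zero order_trans)
    then show "onorm (\<lambda>v. (M x - M u) *v v) \<le> H * norm (y - u)"
      by (rule onorm_le)
  qed (simp_all add: convex_closed_segment)
  then show ?thesis
    by (simp add: matrix_vector_mult_diff_distrib power2_eq_square algebra_simps)
qed

lemma taylor_lower_bound:
  "F y \<ge> F x + G x \<bullet> (y - x) - (norm (M x) + H * norm (y - x)) * (norm (y - x))^2"
proof -
  let ?p = "\<lambda>z. F z - G x \<bullet> z" and ?K = "(norm (M x) + H * norm (y - x)) * norm (y - x)"
  have "norm (?p y - ?p x) \<le> ?K * norm (y - x)"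
  proof (rule differentiable_bound[where S="closed_segment x y" and f'="\<lambda>z v. (G z - G x) \<bullet> v"])
    fix z
    assume z: "z \<in> closed_segment x y"
    have "(?p has_derivative (\<lambda>v. G z \<bullet> v - G x \<bullet> v)) (at z)"
      by (intro has_derivative_diff has_derivative_F bounded_linear_imp_has_derivative
          bounded_linear_inner_right)
    then show "(?p has_derivative (\<lambda>v. (G z - G x) \<bullet> v)) (at z within closed_segment x y)"
      by (simp add: inner_diff_left has_derivative_at_withinI)
    have "norm (G z - G x) \<le> norm (M x *v (z - x)) + norm (G z - G x - M x *v (z - x))"
      by (metis add.commute diff_add_cancel norm_triangle_ineq)
    also have "\<dots> \<le> norm (M x) * norm (z - x) + H * (norm (z - x))^2"
      by (intro add_mono norm_matrix_vector_mult_le taylor_gradient)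
    also have "\<dots> \<le> ?K"
      using segment_bound(1)[OF z] H_nonneg
      by (auto simp: power2_eq_square algebra_simps intro!: add_mono mult_left_mono mult_mono)
    moreover have "onorm (\<lambda>v. (G z - G x) \<bullet> v) \<le> norm (G z - G x)"
      by (rule onorm_le) (simp add: Cauchy_Schwarz_ineq2)
    ultimately show "onorm (\<lambda>v. (G z - G x) \<bullet> v) \<le> ?K"
      by linarith
  qed (simp_all add: convex_closed_segment)
  then show ?thesis
    by (simp add: inner_diff_right power2_eq_square algebra_simps abs_le_iff)
qed

lemma second_difference_approx:
  assumes s: "0 \<le> s"
  shows "\<bar>F (x + s *\<^sub>R v + s *\<^sub>R w) - F (x + s *\<^sub>R v) - F (x + s *\<^sub>R w) + F x - s^2 * (v \<bullet> (M x *v w))\<bar>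
     \<le> s^3 * (H * norm v * norm w * (norm v + norm w))"
proof -
  let ?\<phi> = "\<lambda>\<sigma>. F (x + \<sigma> *\<^sub>R v + s *\<^sub>R w) - F (x + \<sigma> *\<^sub>R v)"
  let ?C = "s^2 * (H * norm v * norm w * (norm v + norm w))"
  have "\<bar>?\<phi> s - ?\<phi> 0 - s * (s * (v \<bullet> (M x *v w)))\<bar> \<le> ?C * s"
  proof (rule affine_approx_of_deriv_bound[OF s, where \<phi>'="\<lambda>\<sigma>. (G (x + \<sigma> *\<^sub>R v + s *\<^sub>R w) - G (x + \<sigma> *\<^sub>R v)) \<bullet> v"])
    fix \<sigma> :: real
    assume \<sigma>: "0 \<le> \<sigma>" "\<sigma> \<le> s"
    have "((\<lambda>\<sigma>. x + \<sigma> *\<^sub>R v + s *\<^sub>R w) has_derivative (\<lambda>h. h *\<^sub>R v)) (at \<sigma>)"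
      and "((\<lambda>\<sigma>. x + \<sigma> *\<^sub>R v) has_derivative (\<lambda>h. h *\<^sub>R v)) (at \<sigma>)"
      by (auto intro!: derivative_eq_intros)
    from has_derivative_compose[OF this(1) has_derivative_F] has_derivative_compose[OF this(2) has_derivative_F]
    show "(?\<phi> has_derivative (\<lambda>h. h * ((G (x + \<sigma> *\<^sub>R v + s *\<^sub>R w) - G (x + \<sigma> *\<^sub>R v)) \<bullet> v))) (at \<sigma>)"
      by (rule has_derivative_eq_rhs[OF has_derivative_diff]) (simp add: inner_diff_left algebra_simps)
    let ?p = "x + \<sigma> *\<^sub>R v"
    have split: "(G (?p + s *\<^sub>R w) - G ?p) \<bullet> v - s * (v \<bullet> (M x *v w))
       = (G (?p + s *\<^sub>R w) - G ?p - M ?p *v (s *\<^sub>R w)) \<bullet> v + ((M ?p - M x) *v (s *\<^sub>R w)) \<bullet> v"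
      by (simp add: inner_diff_left inner_diff_right inner_add_left matrix_vector_mult_diff_rdistrib
          inner_commute scaleR_matrix_vector_assoc[symmetric] matrix_vector_mult_scaleR algebra_simps)
    have "\<bar>(G (?p + s *\<^sub>R w) - G ?p - M ?p *v (s *\<^sub>R w)) \<bullet> v\<bar> \<le> H * (s * norm w)^2 * norm v"
      using taylor_gradient[of "?p + s *\<^sub>R w" ?p] s
      by (intro order_trans[OF Cauchy_Schwarz_ineq2] mult_right_mono) auto
    moreover have "\<bar>((M ?p - M x) *v (s *\<^sub>R w)) \<bullet> v\<bar> \<le> H * (s * norm v) * (s * norm w) * norm v"
    proof -
      have "norm ((M ?p - M x) *v (s *\<^sub>R w)) \<le> H * norm (?p - x) * norm (s *\<^sub>R w)"
        by (rule hessian_lipschitz)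
      also have "\<dots> = H * (\<sigma> * norm v) * (s * norm w)"
        using \<sigma> s by simp
      also have "\<dots> \<le> H * (s * norm v) * (s * norm w)"
        using \<sigma> s H_nonneg by (intro mult_right_mono mult_left_mono) auto
      finally have "norm ((M ?p - M x) *v (s *\<^sub>R w)) \<le> H * (s * norm v) * (s * norm w)" .
      then show ?thesis
        by (intro order_trans[OF Cauchy_Schwarz_ineq2] mult_right_mono) auto
    qed
    ultimately have "\<bar>(G (?p + s *\<^sub>R w) - G ?p) \<bullet> v - s * (v \<bullet> (M x *v w))\<bar>
        \<le> H * (s * norm w)^2 * norm v + H * (s * norm v) * (s * norm w) * norm v"
      unfolding split by linarith
    also have "\<dots> = ?C"
      by (simp add: power2_eq_square algebra_simps)
    finally show "\<bar>(G (x + \<sigma> *\<^sub>R v + s *\<^sub>R w) - G (x + \<sigma> *\<^sub>R v)) \<bullet> v - s * (v \<bullet> (M x *v w))\<bar> \<le> ?C" .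
  qed
  then show ?thesis
    by (simp add: power2_eq_square power3_eq_cube algebra_simps)
qed

lemma hessian_symmetric: "v \<bullet> (M x *v w) = w \<bullet> (M x *v v)"
proof -
  let ?C = "H * norm v * norm w * (norm v + norm w)"
  have "\<bar>v \<bullet> (M x *v w) - w \<bullet> (M x *v v)\<bar> \<le> 0"
  proof (rule le_of_le_add_mult_small[where c="2 * ?C"])
    show "0 \<le> 2 * ?C"
      using H_nonneg by simp
    fix t :: real
    assume t: "0 < t" "t < 1"
    let ?D = "F (x + t *\<^sub>R v + t *\<^sub>R w) - F (x + t *\<^sub>R v) - F (x + t *\<^sub>R w) + F x"
    have "x + t *\<^sub>R w + t *\<^sub>R v = x + t *\<^sub>R v + t *\<^sub>R w"
      by (simp add: algebra_simps)
    then have "\<bar>?D - t^2 * (v \<bullet> (M x *v w))\<bar> \<le> t^3 * ?C" and "\<bar>?D - t^2 * (w \<bullet> (M x *v v))\<bar> \<le> t^3 * ?C"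
      using second_difference_approx[of t x v w] second_difference_approx[of t x w v] t
      by (simp_all add: algebra_simps)
    then have "\<bar>t^2 * (v \<bullet> (M x *v w)) - t^2 * (w \<bullet> (M x *v v))\<bar> \<le> 2 * (t^3 * ?C)"
      by linarith
    then have "t^2 * \<bar>v \<bullet> (M x *v w) - w \<bullet> (M x *v v)\<bar> \<le> 2 * (t^3 * ?C)"
      by (simp add: abs_mult right_diff_distrib[symmetric])
    then show "\<bar>v \<bullet> (M x *v w) - w \<bullet> (M x *v v)\<bar> \<le> 0 + t * (2 * ?C)"
      using t by (simp add: power2_eq_square power3_eq_cube)
  qed
  then show ?thesis
    by simp
qed

lemma transpose_hessian: "transpose (M x) = M x"
  unfolding transpose_def
  by (simp add: vec_eq_iff inner_matrix_vector_mult_axis[of "M x"] hessian_symmetric)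

end

locale strongly_convex_lipschitz_hessian = lipschitz_hessian F G M H
  for F :: "real^'d::finite \<Rightarrow> real" and G M H +
  fixes \<mu> :: real and xs :: "real^'d"
  assumes strongly_convex_F: "strongly_convex \<mu> F"
    and minimizer: "\<And>y. F xs \<le> F y"
    and mu_pos: "\<mu> > 0"
begin

lemma gradient_minimizer_eq_0: "G xs = 0"
proof -
  have "(\<lambda>v. G xs \<bullet> v) = (\<lambda>v. 0)"
    by (rule has_derivative_local_min[OF has_derivative_F]) (intro always_eventually allI minimizer)
  then have "G xs \<bullet> G xs = 0"
    by metis
  then show ?thesis
    by simp
qed

lemma strongly_convex_first_order: "G x \<bullet> (y - x) \<le> F y - F x - \<mu> / 2 * (norm (y - x))^2"
proof -
  let ?d = "y - x"
  define K where "K = (norm (M x) + H * norm ?d) * (norm ?d)^2"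
  have "K \<ge> 0"
    unfolding K_def using H_nonneg by simp
  show ?thesis
  proof (rule le_of_le_add_mult_small[where c="\<mu> / 2 * (norm ?d)^2 + K"])
    show "0 \<le> \<mu> / 2 * (norm ?d)^2 + K"
      using \<open>K \<ge> 0\<close> mu_pos by simp
    fix t :: real
    assume t: "0 < t" "t < 1"
    define p where "p = x + t *\<^sub>R ?d"
    have "t *\<^sub>R y + (1 - t) *\<^sub>R x = p"
      by (simp add: p_def algebra_simps)
    then have convex: "F p \<le> t * F y + (1 - t) * F x - \<mu> / 2 * t * (1 - t) * (norm ?d)^2"
      using strongly_convex_F t unfolding strongly_convex_def by (metis less_eq_real_def)
    have step: "norm (p - x) = t * norm ?d" "G x \<bullet> (p - x) = t * (G x \<bullet> ?d)"
      using t by (simp_all add: p_def)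
    have "F p \<ge> F x + t * (G x \<bullet> ?d) - t^2 * ((norm (M x) + t * H * norm ?d) * (norm ?d)^2)"
      using taylor_lower_bound[of x p] unfolding step by (simp add: power2_eq_square algebra_simps)
    moreover have "t^2 * ((norm (M x) + t * H * norm ?d) * (norm ?d)^2) \<le> t^2 * K"
      unfolding K_def using t H_nonneg
      by (intro mult_left_mono mult_right_mono add_mono) (auto intro!: mult_left_le_one_le)
    ultimately have "t * (G x \<bullet> ?d) \<le> t * F y - t * F x - \<mu> / 2 * t * (1 - t) * (norm ?d)^2 + t^2 * K"
      using convex by (simp add: algebra_simps)
    also have "\<dots> = t * ((F y - F x - \<mu> / 2 * (norm ?d)^2) + t * (\<mu> / 2 * (norm ?d)^2 + K))"
      by (simp add: field_simps power2_eq_square)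
    finally show "G x \<bullet> ?d \<le> (F y - F x - \<mu> / 2 * (norm ?d)^2) + t * (\<mu> / 2 * (norm ?d)^2 + K)"
      using t by simp
  qed
qed

lemma strongly_monotone_at_minimizer: "\<mu> * (norm (y - xs))^2 \<le> G y \<bullet> (y - xs)"
  using strongly_convex_first_order[of y xs] strongly_convex_first_order[of xs y] gradient_minimizer_eq_0
  by (simp add: norm_minus_commute inner_diff_right)

lemma hessian_minimizer_ge: "\<mu> * (norm v)^2 \<le> v \<bullet> (M xs *v v)"
proof (rule le_of_le_add_mult_small[where c="H * (norm v)^3"])
  show "0 \<le> H * (norm v)^3"
    using H_nonneg by simp
  fix t :: real
  assume t: "0 < t" "t < 1"
  let ?y = "xs + t *\<^sub>R v"
  define e where "e = G ?y - G xs - M xs *v (?y - xs)"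
  have "G ?y = t *\<^sub>R (M xs *v v) + e"
    unfolding e_def using gradient_minimizer_eq_0 by (simp add: matrix_vector_mult_scaleR)
  then have "t^2 * (\<mu> * (norm v)^2) \<le> t^2 * (v \<bullet> (M xs *v v)) + t * (e \<bullet> v)"
    using strongly_monotone_at_minimizer[of ?y] t
    by (simp add: inner_add_left inner_commute power2_eq_square algebra_simps)
  also have "\<dots> \<le> t^2 * (v \<bullet> (M xs *v v)) + t * (H * t^2 * (norm v)^3)"
  proof -
    have "e \<bullet> v \<le> H * (norm (t *\<^sub>R v))^2 * norm v"
      using taylor_gradient[of ?y xs] unfolding e_def[symmetric]
      by (intro order_trans[OF norm_cauchy_schwarz] mult_right_mono) auto
    also have "\<dots> = H * t^2 * (norm v)^3"
      using t by (simp add: power_mult_distrib power3_eq_cube power2_eq_square)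
    finally show ?thesis
      using t by (intro add_left_mono mult_left_mono) auto
  qed
  also have "\<dots> = t^2 * (v \<bullet> (M xs *v v) + t * (H * (norm v)^3))"
    by (simp add: power2_eq_square algebra_simps)
  finally show "\<mu> * (norm v)^2 \<le> v \<bullet> (M xs *v v) + t * (H * (norm v)^3)"
    using t by simp
qed

lemma sym_ge_hessian_minimizer: "sym_ge \<mu> (M xs)"
  by (simp add: sym_ge_iff_quadratic_form transpose_hessian hessian_minimizer_ge)

lemma projected_newton_step_error_sq_at_minimizer:
  "(norm (y - matrix_inv (proj_mu \<mu> A) *v G y - xs))^2
     \<le> 2 * ((norm (A - M xs))^2 + H^2 * (norm (y - xs))^2) * (norm (y - xs))^2 / \<mu>^2"
  using projected_newton_step_error_sq[OF sym_ge_hessian_minimizer mu_pos]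
    taylor_gradient[of y xs] gradient_minimizer_eq_0
  by simp

end

definition avg_fun :: "nat \<Rightarrow> (nat \<Rightarrow> real^'d::finite \<Rightarrow> real) \<Rightarrow> real^'d \<Rightarrow> real" where
  "avg_fun n f x = (1 / real n) * (\<Sum>i<n. f i x)"

definition avg_hess :: "nat \<Rightarrow> (nat \<Rightarrow> real^'d::finite \<Rightarrow> 'd mat) \<Rightarrow> real^'d \<Rightarrow> 'd mat" where
  "avg_hess n hess x = (1 / real n) *\<^sub>R (\<Sum>i<n. hess i x)"

lemma power2_norm_avg_le:
  fixes S :: "nat \<Rightarrow> 'a::real_normed_vector"
  assumes "n \<ge> 1"
  shows "(norm ((1 / real n) *\<^sub>R (\<Sum>i<n. S i)))^2 \<le> (1 / real n) * (\<Sum>i<n. (norm (S i))^2)"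
proof -
  have "(norm ((1 / real n) *\<^sub>R (\<Sum>i<n. S i)))^2 \<le> ((1 / real n) * (\<Sum>i<n. norm (S i)))^2"
    by (intro power_mono) (simp_all add: divide_right_mono norm_sum)
  also have "\<dots> \<le> (1 / real n)^2 * ((\<Sum>i<n. (norm (S i))^2) * real n)"
    unfolding power_mult_distrib
    using sum_squared_le_sum_of_squares[of "\<lambda>i. norm (S i)" "{..<n}"] by (intro mult_left_mono) simp_all
  also have "\<dots> = (1 / real n) * (\<Sum>i<n. (norm (S i))^2)"
    using assms by (simp add: power2_eq_square)
  finally show ?thesis .
qed

lemma lipschitz_hessian_avg:
  assumes n: "n \<ge> 1"
    and grad: "\<And>i x. i < n \<Longrightarrow> (f i has_derivative (\<lambda>v. grad i x \<bullet> v)) (at x)"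
    and hess: "\<And>i x. i < n \<Longrightarrow> (grad i has_derivative (\<lambda>v. hess i x *v v)) (at x)"
    and Lip_H: "\<And>i x y. i < n \<Longrightarrow> spec_norm (hess i x - hess i y) \<le> H * norm (x - y)"
    and "H \<ge> 0"
  shows "lipschitz_hessian (avg_fun n f) (avg_grad n grad) (avg_hess n hess) H"
proof unfold_locales
  fix x
  have "((\<lambda>x. (1 / real n) * (\<Sum>i<n. f i x)) has_derivative (\<lambda>v. (1 / real n) * (\<Sum>i<n. grad i x \<bullet> v))) (at x)"
    using grad by (intro has_derivative_mult_right has_derivative_sum) auto
  then show "(avg_fun n f has_derivative (\<lambda>v. avg_grad n grad x \<bullet> v)) (at x)"
    unfolding avg_fun_def[abs_def] avg_grad_def inner_scaleR_left inner_sum_left .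
  have "((\<lambda>x. (1 / real n) *\<^sub>R (\<Sum>i<n. grad i x)) has_derivative (\<lambda>v. (1 / real n) *\<^sub>R (\<Sum>i<n. hess i x *v v))) (at x)"
    using hess by (intro has_derivative_scaleR_right has_derivative_sum) auto
  then show "(avg_grad n grad has_derivative (\<lambda>v. avg_hess n hess x *v v)) (at x)"
    by (simp add: avg_grad_def[abs_def] avg_hess_def scaleR_matrix_vector_assoc[symmetric] sum_matrix_vector_mult)
next
  fix a b v
  have "(avg_hess n hess a - avg_hess n hess b) *v v = (1 / real n) *\<^sub>R (\<Sum>i<n. (hess i a - hess i b) *v v)"
    by (simp add: avg_hess_def scaleR_matrix_vector_assoc[symmetric] sum_matrix_vector_mult
        matrix_vector_mult_diff_rdistrib sum_subtractf scaleR_diff_right)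
  then have "norm ((avg_hess n hess a - avg_hess n hess b) *v v) \<le> (1 / real n) * (\<Sum>i<n. norm ((hess i a - hess i b) *v v))"
    by (simp add: divide_right_mono norm_sum)
  also have "\<dots> \<le> (1 / real n) * (\<Sum>i<n. H * norm (a - b) * norm v)"
  proof (intro mult_left_mono sum_mono)
    fix i
    assume "i \<in> {..<n}"
    then have "spec_norm (hess i a - hess i b) * norm v \<le> H * norm (a - b) * norm v"
      using Lip_H by (intro mult_right_mono) auto
    then show "norm ((hess i a - hess i b) *v v) \<le> H * norm (a - b) * norm v"
      using norm_matrix_vector_mult_le_spec_norm order_trans by blast
  qed simp
  also have "\<dots> = H * norm (a - b) * norm v"
    using n by simp
  finally show "norm ((avg_hess n hess a - avg_hess n hess b) *v v) \<le> H * norm (a - b) * norm v" .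
qed fact

section \<open>Coefficients with respect to a basis of matrices\<close>

lemma sum_coeff_scaleR_basis:
  assumes "is_mat_basis (Bm :: 'd::finite \<Rightarrow> 'd \<Rightarrow> 'd mat)"
  shows "(\<Sum>j\<in>UNIV. \<Sum>l\<in>UNIV. coeff Bm A $ j $ l *\<^sub>R Bm j l) = A"
proof -
  have "\<exists>!c::'d mat. A = (\<Sum>j\<in>UNIV. \<Sum>l\<in>UNIV. c$j$l *\<^sub>R Bm j l)"
    using assms unfolding is_mat_basis_def by blast
  from theI'[OF this] show ?thesis
    unfolding coeff_def by simp
qed

lemma sum_sum_UNIV_eq_sum_pairs:
  "(\<Sum>j\<in>(UNIV::'d::finite set). \<Sum>l\<in>(UNIV::'d set). h j l) = (\<Sum>p\<in>UNIV. h (fst p) (snd p))"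
  by (simp add: sum.cartesian_product case_prod_beta UNIV_Times_UNIV[symmetric] del: UNIV_Times_UNIV)

lemma norm_basis_comb_sq_le:
  fixes Bm :: "'d::finite \<Rightarrow> 'd \<Rightarrow> 'd mat"
  assumes R: "\<And>j l. norm (Bm j l) \<le> R"
  shows "(norm (\<Sum>j\<in>UNIV. \<Sum>l\<in>UNIV. c$j$l *\<^sub>R Bm j l))^2 \<le> real CARD('d)^2 * R^2 * (norm c)^2"
proof -
  let ?s = "\<Sum>p\<in>UNIV. \<bar>c $ fst p $ snd p\<bar>"
  have "norm (\<Sum>j\<in>UNIV. \<Sum>l\<in>UNIV. c$j$l *\<^sub>R Bm j l) \<le> (\<Sum>j\<in>UNIV. \<Sum>l\<in>UNIV. norm (c$j$l *\<^sub>R Bm j l))"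
    by (intro order_trans[OF norm_sum] sum_mono norm_sum)
  also have "\<dots> \<le> (\<Sum>j\<in>UNIV. \<Sum>l\<in>UNIV. R * \<bar>c$j$l\<bar>)"
    by (intro sum_mono) (simp add: mult.commute mult_right_mono[OF R abs_ge_zero])
  also have "\<dots> = R * ?s"
    by (simp add: sum_sum_UNIV_eq_sum_pairs sum_distrib_left)
  finally have "norm (\<Sum>j\<in>UNIV. \<Sum>l\<in>UNIV. c$j$l *\<^sub>R Bm j l) \<le> R * ?s" .
  then have "(norm (\<Sum>j\<in>UNIV. \<Sum>l\<in>UNIV. c$j$l *\<^sub>R Bm j l))^2 \<le> (R * ?s)^2"
    by (intro power_mono) simp_all
  also have "\<dots> = R^2 * ?s^2"
    by (simp add: power_mult_distrib)
  also have "\<dots> \<le> R^2 * ((\<Sum>p\<in>UNIV. \<bar>c $ fst p $ snd p\<bar>^2) * card (UNIV :: ('d \<times> 'd) set))"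
    by (intro mult_left_mono sum_squared_le_sum_of_squares) simp
  also have "\<dots> = real CARD('d)^2 * R^2 * (norm c)^2"
  proof -
    have "(\<Sum>p\<in>UNIV. \<bar>c $ fst p $ snd p\<bar>^2) = (norm c)^2"
      by (simp add: power2_norm_mat_eq_sum sum_sum_UNIV_eq_sum_pairs)
    moreover have "real (card (UNIV :: ('d \<times> 'd) set)) = real CARD('d)^2"
      using card_cartesian_product[of "UNIV::'d set" "UNIV::'d set"] by (simp add: power2_eq_square)
    ultimately show ?thesis
      by simp
  qed
  finally show ?thesis .
qed

lemma norm_orthogonal_basis_comb_sq_le:
  fixes Bm :: "'d::finite \<Rightarrow> 'd \<Rightarrow> 'd mat"
  assumes R: "\<And>j l. norm (Bm j l) \<le> R"
    and orth: "\<And>j l j' l'. (j, l) \<noteq> (j', l') \<Longrightarrow> Bm j l \<bullet> Bm j' l' = 0"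
  shows "(norm (\<Sum>j\<in>UNIV. \<Sum>l\<in>UNIV. c$j$l *\<^sub>R Bm j l))^2 \<le> R^2 * (norm c)^2"
proof -
  let ?b = "\<lambda>p. c $ fst p $ snd p *\<^sub>R Bm (fst p) (snd p)"
  have "pairwise (\<lambda>p q. orthogonal (?b p) (?b q)) UNIV"
    using orth by (auto simp: pairwise_def orthogonal_def prod_eq_iff)
  then have "(norm (\<Sum>j\<in>UNIV. \<Sum>l\<in>UNIV. c$j$l *\<^sub>R Bm j l))^2 = (\<Sum>p\<in>UNIV. (norm (?b p))^2)"
    unfolding sum_sum_UNIV_eq_sum_pairs by (intro norm_sum_Pythagorean) simp
  also have "\<dots> \<le> (\<Sum>p\<in>UNIV. R^2 * (c $ fst p $ snd p)^2)"
  proof (intro sum_mono)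
    fix p :: "'d \<times> 'd"
    have "(norm (Bm (fst p) (snd p)))^2 \<le> R^2"
      by (intro power_mono R) simp
    from mult_right_mono[OF this zero_le_power2[of "c $ fst p $ snd p"]]
    show "(norm (?b p))^2 \<le> R^2 * (c $ fst p $ snd p)^2"
      by (simp add: power_mult_distrib mult.commute)
  qed
  also have "\<dots> = R^2 * (norm c)^2"
    by (simp add: power2_norm_mat_eq_sum sum_sum_UNIV_eq_sum_pairs sum_distrib_left)
  finally show ?thesis .
qed

lemma N_B_ge_1: "N_B n B \<ge> 1"
  unfolding N_B_def by auto

lemma norm_basis_comb_sq_le_N_B:
  fixes B :: "nat \<Rightarrow> 'd::finite \<Rightarrow> 'd \<Rightarrow> 'd mat"
  assumes i: "i < n" and R: "\<And>i j l. i < n \<Longrightarrow> frob (B i j l) \<le> R"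
  shows "(norm (\<Sum>j\<in>UNIV. \<Sum>l\<in>UNIV. c$j$l *\<^sub>R B i j l))^2 \<le> N_B n B * R^2 * (norm c)^2"
proof (cases "\<forall>i<n. \<forall>j l j' l'. (j, l) \<noteq> (j', l') \<longrightarrow> frob_inner (B i j l) (B i j' l') = 0")
  case True
  then have "(norm (\<Sum>j\<in>UNIV. \<Sum>l\<in>UNIV. c$j$l *\<^sub>R B i j l))^2 \<le> R^2 * (norm c)^2"
    using i R by (intro norm_orthogonal_basis_comb_sq_le) (auto simp: frob_inner_eq_inner frob_eq_norm)
  then show ?thesis
    using True unfolding N_B_def by simp
next
  case False
  then have "N_B n B = real CARD('d)^2"
    unfolding N_B_def by (subst if_not_P) auto
  then show ?thesis
    using norm_basis_comb_sq_le[of "B i" R c] i R by (simp add: frob_eq_norm)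
qed

lemma norm_Hmat_minus_avg_hess_sq_le:
  fixes B :: "nat \<Rightarrow> 'd::finite \<Rightarrow> 'd \<Rightarrow> 'd mat" and hess :: "nat \<Rightarrow> real^'d \<Rightarrow> 'd mat"
  assumes n: "n \<ge> 1" and basis: "\<And>i. i < n \<Longrightarrow> is_mat_basis (B i)"
    and R: "\<And>i j l. i < n \<Longrightarrow> frob (B i j l) \<le> R"
  shows "(norm (Hmat n B L - avg_hess n hess x))^2 \<le> N_B n B * R^2 * Hcal n L (\<lambda>i. coeff (B i) (hess i x))"
proof -
  define c where "c i = L i - coeff (B i) (hess i x)" for i
  define S where "S i = (\<Sum>j\<in>UNIV. \<Sum>l\<in>UNIV. c i $ j $ l *\<^sub>R B i j l)" for i
  have "S i = (\<Sum>j\<in>UNIV. \<Sum>l\<in>UNIV. L i $ j $ l *\<^sub>R B i j l) - hess i x" if "i < n" for i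
    using sum_coeff_scaleR_basis[OF basis[OF that], of "hess i x"]
    by (simp add: S_def c_def sum_subtractf scaleR_diff_left)
  then have "Hmat n B L - avg_hess n hess x = (1 / real n) *\<^sub>R (\<Sum>i<n. S i)"
    by (simp add: Hmat_def avg_hess_def sum_subtractf scaleR_diff_right)
  then have "(norm (Hmat n B L - avg_hess n hess x))^2 \<le> (1 / real n) * (\<Sum>i<n. (norm (S i))^2)"
    using power2_norm_avg_le[OF n] by simp
  also have "\<dots> \<le> (1 / real n) * (\<Sum>i<n. N_B n B * R^2 * (norm (c i))^2)"
    unfolding S_def by (intro mult_left_mono sum_mono norm_basis_comb_sq_le_N_B[OF _ R]) auto
  also have "\<dots> = N_B n B * R^2 * Hcal n L (\<lambda>i. coeff (B i) (hess i x))"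
    unfolding Hcal_def c_def by (simp add: sum_distrib_left frob_eq_norm)
  finally show ?thesis .
qed

section \<open>Contractive compression steps\<close>

lemma young_power2_norm_add:
  fixes x y :: "'a::real_inner"
  assumes "\<beta> > 0"
  shows "(norm (x + y))^2 \<le> (1 + \<beta>) * (norm x)^2 + (1 + 1 / \<beta>) * (norm y)^2"
proof -
  have "0 \<le> (norm (\<beta> *\<^sub>R x - y))^2 / \<beta>"
    using assms by simp
  also have "\<dots> = \<beta> * (norm x)^2 - 2 * (x \<bullet> y) + (norm y)^2 / \<beta>"
    using assms unfolding power2_norm_eq_inner
    by (simp add: inner_diff_left inner_diff_right inner_commute field_simps power2_eq_square)
  finally show ?thesis
    by (simp add: power2_norm_eq_inner inner_add_left inner_add_right inner_commute algebra_simps)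
qed

(* The ratio A/B of the paper, for (A, B) = (delta/4, 6/delta - 7/2). *)
definition contr_ratio :: "real \<Rightarrow> real" where
  "contr_ratio \<delta> = (\<delta> / 4) / (6 / \<delta> - 7 / 2)"

(* The coefficients produced by Young's inequality with weights 2/delta and 4/delta. *)
definition contr_fresh_coeff :: "real \<Rightarrow> real" where
  "contr_fresh_coeff \<delta> = (1 + 2 / \<delta>) + (1 + \<delta> / 2) * (1 - \<delta>) * (1 + 4 / \<delta>)"

definition contr_state_coeff :: "real \<Rightarrow> real" where
  "contr_state_coeff \<delta> = (1 + \<delta> / 2) * (1 - \<delta>) * (1 + \<delta> / 4)"

lemma contr_coeffs_nonneg:
  assumes "0 < \<delta>" "\<delta> \<le> 1"
  shows "contr_fresh_coeff \<delta> \<ge> 0" and "contr_state_coeff \<delta> \<ge> 0"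
  using assms unfolding contr_fresh_coeff_def contr_state_coeff_def
  by (auto intro!: add_nonneg_nonneg mult_nonneg_nonneg)

lemma power2_norm_compressed_le:
  fixes a b e :: "'a::real_inner"
  assumes \<delta>: "0 < \<delta>" "\<delta> \<le> 1" and e: "(norm e)^2 \<le> (1 - \<delta>) * (norm (a - b))^2"
  shows "(norm (a - e))^2 \<le> contr_fresh_coeff \<delta> * (norm a)^2 + contr_state_coeff \<delta> * (norm b)^2"
proof -
  have "(norm (a - b))^2 \<le> (1 + 4 / \<delta>) * (norm a)^2 + (1 + \<delta> / 4) * (norm b)^2"
    using young_power2_norm_add[of "4 / \<delta>" a "- b"] \<delta> by simp
  then have "(norm e)^2 \<le> (1 - \<delta>) * ((1 + 4 / \<delta>) * (norm a)^2 + (1 + \<delta> / 4) * (norm b)^2)"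
    using e \<delta> by (meson diff_ge_0_iff_ge mult_left_mono order_trans)
  then have "(1 + \<delta> / 2) * (norm e)^2
      \<le> (1 + \<delta> / 2) * ((1 - \<delta>) * ((1 + 4 / \<delta>) * (norm a)^2 + (1 + \<delta> / 4) * (norm b)^2))"
    using \<delta> by (intro mult_left_mono) auto
  moreover have "(norm (a - e))^2 \<le> (1 + 2 / \<delta>) * (norm a)^2 + (1 + \<delta> / 2) * (norm e)^2"
    using young_power2_norm_add[of "2 / \<delta>" a "- e"] \<delta> by simp
  moreover have "(1 + 2 / \<delta>) * (norm a)^2
      + (1 + \<delta> / 2) * ((1 - \<delta>) * ((1 + 4 / \<delta>) * (norm a)^2 + (1 + \<delta> / 4) * (norm b)^2))
      = contr_fresh_coeff \<delta> * (norm a)^2 + contr_state_coeff \<delta> * (norm b)^2"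
    unfolding contr_fresh_coeff_def contr_state_coeff_def using \<delta> by (simp add: field_simps)
  ultimately show ?thesis
    by linarith
qed

lemma contr_coeffs_le_1:
  assumes "0 < \<delta>" "\<delta> \<le> 1"
  shows "contr_fresh_coeff \<delta> * contr_ratio \<delta> + contr_state_coeff \<delta> \<le> 1"
proof -
  have den: "24 - 14 * \<delta> > 0"
    using assms by simp
  have "contr_fresh_coeff \<delta> * contr_ratio \<delta> = (12 * \<delta> - 5 * \<delta>^3 - \<delta>^4) / (2 * (24 - 14 * \<delta>))"
    unfolding contr_fresh_coeff_def contr_ratio_def using assms den
    by (simp add: field_simps power2_eq_square power3_eq_cube power4_eq_xxxx)
  also have "\<dots> \<le> \<delta> / 4 + 5 * \<delta>^2 / 8 + \<delta>^3 / 8"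
  proof -
    have "\<delta> * \<delta> \<le> 1"
      using assms mult_le_one[of \<delta> \<delta>] by simp
    then have "0 \<le> \<delta>^2 * (92 - 26 * \<delta> - 10 * \<delta>^2)"
      using assms by (intro mult_nonneg_nonneg) (auto simp: power2_eq_square)
    then have "4 * (12 * \<delta> - 5 * \<delta>^3 - \<delta>^4) \<le> (2 * \<delta> + 5 * \<delta>^2 + \<delta>^3) * (24 - 14 * \<delta>)"
      by (simp add: algebra_simps power2_eq_square power3_eq_cube power4_eq_xxxx)
    then show ?thesis
      using den by (simp add: field_simps)
  qed
  moreover have "contr_state_coeff \<delta> = 1 - \<delta> / 4 - 5 * \<delta>^2 / 8 - \<delta>^3 / 8"
    unfolding contr_state_coeff_def by (simp add: field_simps power2_eq_square power3_eq_cube)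
  ultimately show ?thesis
    by linarith
qed

lemma power2_norm_compressed_le_radius:
  fixes a b e :: "'a::real_inner"
  assumes \<delta>: "0 < \<delta>" "\<delta> \<le> 1" and e: "(norm e)^2 \<le> (1 - \<delta>) * (norm (a - b))^2"
    and b: "(norm b)^2 \<le> K" and a: "(norm a)^2 \<le> contr_ratio \<delta> * K"
  shows "(norm (a - e))^2 \<le> K"
proof -
  have "K \<ge> 0"
    using b order_trans zero_le_power2 by blast
  have "(norm (a - e))^2 \<le> contr_fresh_coeff \<delta> * (norm a)^2 + contr_state_coeff \<delta> * (norm b)^2"
    by (rule power2_norm_compressed_le[OF \<delta> e])
  also have "\<dots> \<le> contr_fresh_coeff \<delta> * (contr_ratio \<delta> * K) + contr_state_coeff \<delta> * K"
    by (intro add_mono mult_left_mono a b contr_coeffs_nonneg \<delta>)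
  also have "\<dots> = (contr_fresh_coeff \<delta> * contr_ratio \<delta> + contr_state_coeff \<delta>) * K"
    by (simp add: algebra_simps)
  also have "\<dots> \<le> K"
    using mult_right_mono[OF contr_coeffs_le_1[OF \<delta>] \<open>K \<ge> 0\<close>] by simp
  finally show ?thesis .
qed

lemma deterministic_contraction_vec_le:
  assumes "deterministic Q" "contraction_vec \<delta> Q" "q \<in> set_pmf (Q v)"
  shows "(norm (v - q))^2 \<le> (1 - \<delta>) * (norm v)^2"
proof -
  obtain c where "\<And>a. Q a = return_pmf (c a)"
    using assms(1) unfolding deterministic_def by blast
  with assms(2,3) show ?thesis
    unfolding contraction_vec_def by (metis expectation_return_pmf set_return_pmf singletonD)
qed

lemma deterministic_contraction_mat_le:
  assumes "deterministic C" "contraction_mat \<delta> C" "U \<in> set_pmf (C A)"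
  shows "(norm (A - U))^2 \<le> (1 - \<delta>) * (norm A)^2"
proof -
  obtain c where "\<And>a. C a = return_pmf (c a)"
    using assms(1) unfolding deterministic_def by blast
  with assms(2,3) show ?thesis
    unfolding contraction_mat_def frob_eq_norm by (metis expectation_return_pmf set_return_pmf singletonD)
qed

lemma convex_comb_of_power2_dist_le:
  assumes "convex_comb_of y k a" and bound: "\<And>t. t \<le> k \<Longrightarrow> (a t - b)^2 \<le> Q"
  shows "(y - b)^2 \<le> Q"
proof -
  obtain c where c0: "\<forall>t\<le>k. c t \<ge> 0" and c1: "(\<Sum>t\<le>k. c t) = 1" and y: "y = (\<Sum>t\<le>k. c t * a t)"
    using assms(1) unfolding convex_comb_of_def by blast
  have "Q \<ge> 0"
    using bound[of 0] zero_le_power2 order_trans by blast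
  have "y - b = (\<Sum>t\<le>k. c t * (a t - b))"
    using y c1 by (simp add: right_diff_distrib sum_subtractf sum_distrib_right[symmetric])
  then have "\<bar>y - b\<bar> \<le> (\<Sum>t\<le>k. c t * \<bar>a t - b\<bar>)"
    using c0 by (simp add: order_trans[OF sum_abs] abs_mult)
  also have "\<dots> \<le> (\<Sum>t\<le>k. c t * sqrt Q)"
    using c0 bound by (intro sum_mono mult_left_mono) (auto simp: real_le_rsqrt)
  also have "\<dots> = sqrt Q"
    using c1 by (simp add: sum_distrib_right[symmetric])
  finally show ?thesis
    using \<open>Q \<ge> 0\<close> by (metis abs_ge_zero power2_abs real_sqrt_le_iff real_sqrt_pow2 power_mono)
qed

lemma power2_norm_le_of_convex_comb_components:
  fixes x :: "nat \<Rightarrow> real^'d::finite"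
  assumes comb: "\<And>j. convex_comb_of (y $ j) k (\<lambda>t. x t $ j)"
    and bound: "\<And>t. t \<le> k \<Longrightarrow> (norm (x t - xs))^2 \<le> c"
  shows "(norm (y - xs))^2 \<le> real CARD('d) * c"
proof -
  have "((y - xs) $ j)^2 \<le> c" for j
  proof -
    have "(x t $ j - xs $ j)^2 \<le> c" if "t \<le> k" for t
    proof -
      have "\<bar>(x t - xs) $ j\<bar>^2 \<le> (norm (x t - xs))^2"
        by (intro power_mono component_le_norm_cart) simp
      then show ?thesis
        using bound[OF that] by simp
    qed
    then show ?thesis
      using convex_comb_of_power2_dist_le[OF comb] by simp
  qed
  then have "(\<Sum>j\<in>UNIV. ((y - xs) $ j)^2) \<le> (\<Sum>j\<in>(UNIV::'d set). c)"
    by (intro sum_mono) simp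
  then show ?thesis
    by (simp add: power2_norm_vec_eq_sum[of "y - xs"])
qed

lemma Hcal_le_of_convex_comb:
  fixes L :: "nat \<Rightarrow> 'd::finite mat" and h :: "nat \<Rightarrow> real^'d \<Rightarrow> 'd mat"
  assumes n: "n \<ge> 1"
    and comb: "\<And>i j l. i < n \<Longrightarrow> convex_comb_of (L i $ j $ l) k (\<lambda>t. h i (z t) $ j $ l)"
    and lip: "\<And>i x y j l. i < n \<Longrightarrow> \<bar>h i x $ j $ l - h i y $ j $ l\<bar> \<le> M2 * norm (x - y)"
    and bound: "\<And>t. t \<le> k \<Longrightarrow> (norm (z t - xs))^2 \<le> Z"
    and "M2 \<ge> 0"
  shows "Hcal n L (\<lambda>i. h i xs) \<le> real CARD('d)^2 * M2^2 * Z"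
proof -
  have entry: "((L i - h i xs) $ j $ l)^2 \<le> M2^2 * Z" if i: "i < n" for i j l
  proof -
    have "(h i (z t) $ j $ l - h i xs $ j $ l)^2 \<le> M2^2 * Z" if "t \<le> k" for t
    proof -
      have "\<bar>h i (z t) $ j $ l - h i xs $ j $ l\<bar>^2 \<le> (M2 * norm (z t - xs))^2"
        by (intro power_mono lip[OF i]) simp
      also have "\<dots> \<le> M2^2 * Z"
        using bound[OF that] by (simp add: power_mult_distrib mult_left_mono)
      finally show ?thesis
        by simp
    qed
    then show ?thesis
      using convex_comb_of_power2_dist_le[OF comb[OF i]] by simp
  qed
  have "(frob (L i - h i xs))^2 \<le> real CARD('d)^2 * M2^2 * Z" if "i < n" for i
  proof -
    have "(frob (L i - h i xs))^2 \<le> (\<Sum>j\<in>(UNIV::'d set). \<Sum>l\<in>(UNIV::'d set). M2^2 * Z)"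
      unfolding frob_eq_norm power2_norm_mat_eq_sum by (intro sum_mono entry[OF that])
    then show ?thesis
      by (simp add: power2_eq_square)
  qed
  then have "Hcal n L (\<lambda>i. h i xs) \<le> (1 / real n) * (\<Sum>i<n. real CARD('d)^2 * M2^2 * Z)"
    unfolding Hcal_def by (intro mult_left_mono sum_mono) auto
  also have "\<dots> = real CARD('d)^2 * M2^2 * Z"
    using n by simp
  finally show ?thesis .
qed

section \<open>Runs of Algorithm BL1\<close>

lemma BL1_run_w_Suc_eq_z:
  assumes "BL1_run n B grad hess \<mu> \<alpha> \<eta> p Q C x z w L \<xi> g"
  shows "\<exists>t\<le>k. w (Suc k) = z t"
proof (induction k)
  case 0
  show ?case
    using assms unfolding BL1_run_def by auto
next
  case (Suc k)
  then show ?case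
    using assms unfolding BL1_run_def by (metis le_Suc_eq order_refl)
qed

lemma BL1_run_x_Suc:
  assumes run: "BL1_run n B grad hess \<mu> \<alpha> \<eta> p Q C x z w L \<xi> g" and \<mu>: "\<mu> > 0"
  shows "x (Suc k) = w (Suc k) - matrix_inv (proj_mu \<mu> (Hmat n B (L k))) *v avg_grad n grad (w (Suc k))"
proof -
  let ?P = "proj_mu \<mu> (Hmat n B (L k))"
  have w: "w (Suc k) = (if \<xi> k then z k else w k)"
    and g: "g k = (if \<xi> k then avg_grad n grad (z k) else ?P *v (z k - w k) + avg_grad n grad (w k))"
    and x: "x (Suc k) = z k - matrix_inv ?P *v g k"
    using run unfolding BL1_run_def by blast+
  have "matrix_inv ?P *v (?P *v (z k - w k)) = z k - w k"
    by (simp add: matrix_vector_mul_assoc matrix_inv_sym_ge(1)[OF sym_ge_proj_mu \<mu>])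
  then show ?thesis
    using w g x by (cases "\<xi> k") (simp_all add: matrix_vector_right_distrib)
qed

lemma BL1_run_z_Suc_le:
  assumes run: "BL1_run n B grad hess \<mu> \<alpha> 1 p Q C x z w L \<xi> g"
    and Q: "deterministic (Q k)" "contraction_vec \<delta> (Q k)"
    and z: "(norm (z k - xs))^2 \<le> K" and x: "(norm (x (Suc k) - xs))^2 \<le> contr_ratio \<delta> * K"
  shows "(norm (z (Suc k) - xs))^2 \<le> K"
proof -
  obtain q where q: "q \<in> set_pmf (Q k (x (Suc k) - z k))" and z_Suc: "z (Suc k) = z k + 1 *\<^sub>R q"
    using run unfolding BL1_run_def by blast
  have "(norm ((x (Suc k) - z k) - q))^2 \<le> (1 - \<delta>) * (norm ((x (Suc k) - xs) - (z k - xs)))^2"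
    using deterministic_contraction_vec_le[OF Q q] by simp
  from power2_norm_compressed_le_radius[OF _ _ this z x]
  show ?thesis
    using Q(2) z_Suc unfolding contraction_vec_def by (simp add: algebra_simps)
qed

lemma BL1_run_L_Suc_le:
  assumes run: "BL1_run n B grad hess \<mu> 1 \<eta> p Q C x z w L \<xi> g" and i: "i < n"
    and C: "deterministic (C k i)" "contraction_mat \<delta> (C k i)"
  shows "(norm (L (Suc k) i - Ls i))^2
    \<le> contr_fresh_coeff \<delta> * (norm (coeff (B i) (hess i (z k)) - Ls i))^2
       + contr_state_coeff \<delta> * (norm (L k i - Ls i))^2"
proof -
  let ?a = "coeff (B i) (hess i (z k)) - Ls i" and ?b = "L k i - Ls i"
  have "?a - ?b = coeff (B i) (hess i (z k)) - L k i"
    by simp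
  then obtain U where U: "U \<in> set_pmf (C k i (?a - ?b))" and L_Suc: "L (Suc k) i = L k i + 1 *\<^sub>R U"
    using run i unfolding BL1_run_def by metis
  have "(norm ((?a - ?b) - U))^2 \<le> (1 - \<delta>) * (norm (?a - ?b))^2"
    by (rule deterministic_contraction_mat_le[OF C U])
  from power2_norm_compressed_le[OF _ _ this] C(2) L_Suc
  show ?thesis
    unfolding contraction_mat_def by (simp add: algebra_simps)
qed

lemma BL1_run_Hcal_Suc_le:
  assumes run: "BL1_run n B grad hess \<mu> 1 \<eta> p Q C x z w L \<xi> g" and n: "n \<ge> 1"
    and C: "\<And>i. i < n \<Longrightarrow> deterministic (C k i) \<and> contraction_mat \<delta> (C k i)"
    and fresh: "\<And>i. i < n \<Longrightarrow> (norm (coeff (B i) (hess i (z k)) - Ls i))^2 \<le> contr_ratio \<delta> * K"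
    and state: "Hcal n (L k) Ls \<le> K"
  shows "Hcal n (L (Suc k)) Ls \<le> K"
proof -
  have \<delta>: "0 < \<delta>" "\<delta> \<le> 1"
    using C[of 0] n unfolding contraction_mat_def by auto
  have "K \<ge> 0"
    using state n unfolding Hcal_def by (meson order_trans sum_nonneg zero_le_power2 mult_nonneg_nonneg
        divide_nonneg_nonneg of_nat_0_le_iff zero_le_one)
  have "(norm (L (Suc k) i - Ls i))^2
      \<le> contr_fresh_coeff \<delta> * (contr_ratio \<delta> * K) + contr_state_coeff \<delta> * (norm (L k i - Ls i))^2"
    if i: "i < n" for i
    using BL1_run_L_Suc_le[OF run i conjunct1[OF C[OF i]] conjunct2[OF C[OF i]], where Ls=Ls]
      fresh[OF i] contr_coeffs_nonneg[OF \<delta>]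
    by (meson add_right_mono mult_left_mono order_trans)
  then have "Hcal n (L (Suc k)) Ls \<le> (1 / real n) *
      (\<Sum>i<n. contr_fresh_coeff \<delta> * (contr_ratio \<delta> * K) + contr_state_coeff \<delta> * (norm (L k i - Ls i))^2)"
    unfolding Hcal_def frob_eq_norm by (intro mult_left_mono sum_mono) auto
  also have "\<dots> = contr_fresh_coeff \<delta> * (contr_ratio \<delta> * K) + contr_state_coeff \<delta> * Hcal n (L k) Ls"
    unfolding Hcal_def frob_eq_norm using n by (simp add: sum.distrib sum_distrib_left algebra_simps)
  also have "\<dots> \<le> (contr_fresh_coeff \<delta> * contr_ratio \<delta> + contr_state_coeff \<delta>) * K"
    using mult_left_mono[OF state contr_coeffs_nonneg(2)[OF \<delta>]] by (simp add: algebra_simps)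
  also have "\<dots> \<le> K"
    using mult_right_mono[OF contr_coeffs_le_1[OF \<delta>] \<open>K \<ge> 0\<close>] by simp
  finally show ?thesis .
qed

locale BL1_problem =
  fixes n :: nat and f :: "nat \<Rightarrow> real^'d::finite \<Rightarrow> real" and grad :: "nat \<Rightarrow> real^'d \<Rightarrow> real^'d"
    and hess :: "nat \<Rightarrow> real^'d \<Rightarrow> 'd mat" and B :: "nat \<Rightarrow> 'd \<Rightarrow> 'd \<Rightarrow> 'd mat"
    and H M\<^sub>1 M\<^sub>2 R \<mu> :: real and xs :: "real^'d"
  assumes n_pos: "n \<ge> 1"
    and grad: "\<And>i x. i < n \<Longrightarrow> (f i has_derivative (\<lambda>v. grad i x \<bullet> v)) (at x)"
    and hess: "\<And>i x. i < n \<Longrightarrow> (grad i has_derivative (\<lambda>v. hess i x *v v)) (at x)"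
    and Lip_H: "\<And>i x y. i < n \<Longrightarrow> spec_norm (hess i x - hess i y) \<le> H * norm (x - y)"
    and H_pos: "H > 0"
    and strongly_convex_avg: "strongly_convex \<mu> (avg_fun n f)"
    and minimizer_avg: "\<And>y. avg_fun n f xs \<le> avg_fun n f y"
    and mu_pos: "\<mu> > 0"
    and basis: "\<And>i. i < n \<Longrightarrow> is_mat_basis (B i)"
    and basis_R: "\<And>i j l. i < n \<Longrightarrow> frob (B i j l) \<le> R"
    and R_pos: "R > 0"
    and Lip_M1: "\<And>i x y. i < n \<Longrightarrow>
                   frob (coeff (B i) (hess i x) - coeff (B i) (hess i y)) \<le> M\<^sub>1 * norm (x - y)"
    and M1_pos: "M\<^sub>1 > 0"
    and Lip_M2: "\<And>i x y j l. i < n \<Longrightarrow>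
                   \<bar>coeff (B i) (hess i x) $ j $ l - coeff (B i) (hess i y) $ j $ l\<bar> \<le> M\<^sub>2 * norm (x - y)"
    and M2_pos: "M\<^sub>2 > 0"

sublocale BL1_problem \<subseteq> strongly_convex_lipschitz_hessian
  "avg_fun n f" "avg_grad n grad" "avg_hess n hess" H \<mu> xs
  using lipschitz_hessian_avg[OF n_pos grad hess Lip_H] H_pos strongly_convex_avg minimizer_avg mu_pos
  by (simp add: strongly_convex_lipschitz_hessian_def strongly_convex_lipschitz_hessian_axioms_def)

context BL1_problem
begin

abbreviation Lstar :: "nat \<Rightarrow> 'd mat" where
  "Lstar \<equiv> \<lambda>i. coeff (B i) (hess i xs)"

lemma BL1_newton_step:
  assumes run: "BL1_run n B grad hess \<mu> \<alpha> \<eta> p Q C x z w L \<xi> g"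
    and z: "\<forall>t\<le>k. (norm (z t - xs))^2 \<le> r"
    and H_small: "16 * (N_B n B * R^2 * Hcal n (L k) Lstar) \<le> \<theta> * \<mu>^2"
    and z_small: "4 * (H^2 * r) \<le> \<theta> * \<mu>^2"
  shows "(norm (x (Suc k) - xs))^2 \<le> \<theta> * r"
proof -
  obtain t where "t \<le> k" "w (Suc k) = z t"
    using BL1_run_w_Suc_eq_z[OF run] by blast
  then have w: "(norm (w (Suc k) - xs))^2 \<le> r"
    using z by simp
  let ?\<rho> = "(norm (w (Suc k) - xs))^2"
  have "r \<ge> 0"
    using w order_trans zero_le_power2 by blast
  then have "0 \<le> \<theta> * \<mu>^2"
    using z_small mult_nonneg_nonneg[OF zero_le_power2[of H]] by (meson order_trans mult_nonneg_nonneg zero_le_numeral)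
  then have \<theta>: "\<theta> \<ge> 0"
    using mu_pos by (simp add: zero_le_mult_iff)
  have small: "2 * (N_B n B * R^2 * Hcal n (L k) Lstar + H^2 * r) \<le> \<theta> * \<mu>^2"
  proof -
    define a where "a = N_B n B * R^2 * Hcal n (L k) Lstar"
    define b where "b = H^2 * r"
    have "b \<ge> 0"
      unfolding b_def using \<open>r \<ge> 0\<close> by simp
    then show ?thesis
      using H_small[folded a_def] z_small[folded b_def] unfolding a_def[symmetric] b_def[symmetric]
      by (simp add: distrib_left)
  qed
  have "(norm (x (Suc k) - xs))^2
      \<le> 2 * ((norm (Hmat n B (L k) - avg_hess n hess xs))^2 + H^2 * ?\<rho>) * ?\<rho> / \<mu>^2"
    using projected_newton_step_error_sq_at_minimizer[of "w (Suc k)" "Hmat n B (L k)"]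
    unfolding BL1_run_x_Suc[OF run mu_pos] by simp
  also have "\<dots> \<le> 2 * (N_B n B * R^2 * Hcal n (L k) Lstar + H^2 * r) * ?\<rho> / \<mu>^2"
    using norm_Hmat_minus_avg_hess_sq_le[OF n_pos basis basis_R, where L="L k" and hess=hess and x=xs] w
    by (intro divide_right_mono mult_right_mono mult_left_mono add_mono) auto
  also have "\<dots> \<le> \<theta> * \<mu>^2 * ?\<rho> / \<mu>^2"
    using small by (intro divide_right_mono mult_right_mono) auto
  also have "\<dots> \<le> \<theta> * r"
    using mu_pos w \<theta> by (simp add: mult_left_mono)
  finally show ?thesis .
qed

lemma BL1_Hcal_bound_of_convex_combinations:
  fixes c :: real
  assumes c_M: "c \<le> \<mu>^2 / (16 * real CARD('d)^4 * N_B n B * R^2 * M\<^sub>2^2)"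
    and z_comb: "\<forall>j k. convex_comb_of (z k $ j) k (\<lambda>t. x t $ j)"
    and L_comb: "\<forall>i j l k. i < n \<longrightarrow> convex_comb_of (L k i $ j $ l) k (\<lambda>t. coeff (B i) (hess i (z t)) $ j $ l)"
    and x: "\<forall>t\<le>k. (norm (x t - xs))^2 \<le> c"
  shows "Hcal n (L k) Lstar \<le> \<mu>^2 / (16 * real CARD('d) * N_B n B * R^2)"
proof -
  define d where "d = real CARD('d)"
  have d: "d \<ge> 1"
    unfolding d_def by simp
  have "(norm (z t - xs))^2 \<le> d * c" if "t \<le> k" for t
    using power2_norm_le_of_convex_comb_components[of "z t" t x xs c] z_comb x that
    unfolding d_def by auto
  then have "Hcal n (L k) Lstar \<le> d^2 * M\<^sub>2^2 * (d * c)"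
    using Hcal_le_of_convex_comb[OF n_pos _ Lip_M2, where L="L k" and k=k and z=z and xs=xs and Z="d * c"]
      L_comb M2_pos unfolding d_def by auto
  also have "\<dots> = d^3 * M\<^sub>2^2 * c"
    by (simp add: power2_eq_square power3_eq_cube)
  also have "\<dots> \<le> d^3 * M\<^sub>2^2 * (\<mu>^2 / (16 * d^4 * N_B n B * R^2 * M\<^sub>2^2))"
    using c_M d unfolding d_def[symmetric] by (intro mult_left_mono) simp_all
  also have "\<dots> = \<mu>^2 / (16 * d * N_B n B * R^2)"
    using d N_B_ge_1[of n B] R_pos M2_pos
    by (simp add: field_simps power2_eq_square power3_eq_cube power4_eq_xxxx)
  finally show ?thesis
    unfolding d_def .
qed

lemma BL1_bounded_of_convex_combinations:
  fixes c :: real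
  assumes c_H: "c \<le> \<mu>^2 / (4 * real CARD('d)^2 * H^2)"
    and c_M: "c \<le> \<mu>^2 / (16 * real CARD('d)^4 * N_B n B * R^2 * M\<^sub>2^2)"
    and run: "BL1_run n B grad hess \<mu> \<alpha> \<eta> p Q C x z w L \<xi> g"
    and z_comb: "\<forall>j k. convex_comb_of (z k $ j) k (\<lambda>t. x t $ j)"
    and L_comb: "\<forall>i j l k. i < n \<longrightarrow> convex_comb_of (L k i $ j $ l) k (\<lambda>t. coeff (B i) (hess i (z t)) $ j $ l)"
    and x0: "(norm (x 0 - xs))^2 \<le> c"
  shows "(norm (z k - xs))^2 \<le> real CARD('d) * c
    \<and> Hcal n (L k) Lstar \<le> \<mu>^2 / (16 * real CARD('d) * N_B n B * R^2)"
proof -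
  define d where "d = real CARD('d)"
  have d: "d \<ge> 1"
    unfolding d_def by simp
  have z_bound: "(norm (z t - xs))^2 \<le> d * c" if "\<forall>t\<le>k. (norm (x t - xs))^2 \<le> c" "t \<le> k" for k t
    using power2_norm_le_of_convex_comb_components[of "z t" t x xs c] z_comb that
    unfolding d_def by auto
  note H_bound = BL1_Hcal_bound_of_convex_combinations[OF c_M z_comb L_comb, folded d_def]
  have "\<forall>t\<le>k. (norm (x t - xs))^2 \<le> c" for k
  proof (induction k)
    case 0
    then show ?case
      using x0 by simp
  next
    case (Suc k)
    have "16 * (N_B n B * R^2 * Hcal n (L k) Lstar) \<le> 1 / d * \<mu>^2"
      using mult_left_mono[OF H_bound[OF Suc.IH], of "16 * N_B n B * R^2"] N_B_ge_1[of n B] R_pos d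
      by (simp add: field_simps)
    moreover have "4 * (H^2 * (d * c)) \<le> 1 / d * \<mu>^2"
      using mult_left_mono[OF c_H[folded d_def], of "4 * H^2 * d"] d H_pos
      by (simp add: field_simps power2_eq_square)
    ultimately have "(norm (x (Suc k) - xs))^2 \<le> 1 / d * (d * c)"
      using z_bound[OF Suc.IH] by (intro BL1_newton_step[OF run]) auto
    then show ?case
      using Suc.IH d le_Suc_eq by auto
  qed
  then show ?thesis
    using z_bound H_bound unfolding d_def by blast
qed

lemma BL1_step_of_contractions:
  fixes c K :: real
  assumes K: "K \<le> contr_ratio \<delta>\<^sub>M * \<mu>^2 / (16 * N_B n B * R^2)"
    and c_H: "c \<le> contr_ratio \<delta>\<^sub>M * \<mu>^2 / (4 * H^2)"
    and c_M: "c \<le> contr_ratio \<delta> * K / M\<^sub>1^2"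
    and Q: "deterministic (Q k)" "contraction_vec \<delta>\<^sub>M (Q k)"
    and C: "\<And>i. i < n \<Longrightarrow> deterministic (C k i) \<and> contraction_mat \<delta> (C k i)"
    and run: "BL1_run n B grad hess \<mu> 1 1 p Q C x z w L \<xi> g"
    and z: "\<forall>t\<le>k. (norm (z t - xs))^2 \<le> c" and L: "Hcal n (L k) Lstar \<le> K"
  shows "(norm (z (Suc k) - xs))^2 \<le> c \<and> Hcal n (L (Suc k)) Lstar \<le> K"
proof
  have "16 * (N_B n B * R^2 * Hcal n (L k) Lstar) \<le> contr_ratio \<delta>\<^sub>M * \<mu>^2"
    using mult_left_mono[OF order_trans[OF L K], of "16 * N_B n B * R^2"] N_B_ge_1[of n B] R_pos
    by (simp add: field_simps)
  moreover have "4 * (H^2 * c) \<le> contr_ratio \<delta>\<^sub>M * \<mu>^2"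
    using mult_left_mono[OF c_H, of "4 * H^2"] H_pos by (simp add: field_simps)
  ultimately have "(norm (x (Suc k) - xs))^2 \<le> contr_ratio \<delta>\<^sub>M * c"
    by (rule BL1_newton_step[OF run z])
  then show "(norm (z (Suc k) - xs))^2 \<le> c"
    using BL1_run_z_Suc_le[OF run Q] z by blast
  show "Hcal n (L (Suc k)) Lstar \<le> K"
  proof (rule BL1_run_Hcal_Suc_le[OF run n_pos C _ L])
    fix i
    assume "i < n"
    then have "norm (coeff (B i) (hess i (z k)) - Lstar i) \<le> M\<^sub>1 * norm (z k - xs)"
      using Lip_M1 by (simp add: frob_eq_norm)
    then have "(norm (coeff (B i) (hess i (z k)) - Lstar i))^2 \<le> M\<^sub>1^2 * (norm (z k - xs))^2"
      by (metis norm_ge_zero power_mono power_mult_distrib)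
    also have "\<dots> \<le> M\<^sub>1^2 * c"
      using z by (simp add: mult_left_mono)
    also have "\<dots> \<le> contr_ratio \<delta> * K"
      using c_M M1_pos by (simp add: field_simps)
    finally show "(norm (coeff (B i) (hess i (z k)) - Lstar i))^2 \<le> contr_ratio \<delta> * K" .
  qed
qed

lemma BL1_bounded_of_contractions:
  fixes c K :: real
  assumes K: "K \<le> contr_ratio \<delta>\<^sub>M * \<mu>^2 / (16 * N_B n B * R^2)"
    and c_H: "c \<le> contr_ratio \<delta>\<^sub>M * \<mu>^2 / (4 * H^2)"
    and c_M: "c \<le> contr_ratio \<delta> * K / M\<^sub>1^2"
    and Q: "\<forall>k. deterministic (Q k) \<and> contraction_vec \<delta>\<^sub>M (Q k)"
    and C: "\<forall>k i. i < n \<longrightarrow> deterministic (C k i) \<and> contraction_mat \<delta> (C k i)"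
    and run: "BL1_run n B grad hess \<mu> 1 1 p Q C x z w L \<xi> g"
    and z0: "(norm (z 0 - xs))^2 \<le> c" and L0: "Hcal n (L 0) Lstar \<le> K"
  shows "(norm (z k - xs))^2 \<le> c \<and> Hcal n (L k) Lstar \<le> K"
proof -
  have "(\<forall>t\<le>k. (norm (z t - xs))^2 \<le> c) \<and> Hcal n (L k) Lstar \<le> K" for k
  proof (induction k)
    case 0
    then show ?case
      using z0 L0 by simp
  next
    case (Suc k)
    then have "(norm (z (Suc k) - xs))^2 \<le> c \<and> Hcal n (L (Suc k)) Lstar \<le> K"
      using Q C by (intro BL1_step_of_contractions[OF K c_H c_M _ _ _ run]) auto
    then show ?case
      using Suc le_Suc_eq by auto
  qed
  then show ?thesis
    by blast
qed

end

theorem theorem4p11: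
  fixes n :: nat
    and f :: "nat \<Rightarrow> real^'d::finite \<Rightarrow> real"
    and grad :: "nat \<Rightarrow> real^'d \<Rightarrow> real^'d"
    and hess :: "nat \<Rightarrow> real^'d \<Rightarrow> real^'d^'d"
    and B :: "nat \<Rightarrow> 'd \<Rightarrow> 'd \<Rightarrow> real^'d^'d"
    and \<mu> H H\<^sub>1 M\<^sub>1 M\<^sub>2 R :: real
    and xstar :: "real^'d"
  assumes n_pos: "n \<ge> 1"
    and mu_pos: "\<mu> > 0"
    and grad: "\<And>i x. i < n \<Longrightarrow> (f i has_derivative (\<lambda>v. grad i x \<bullet> v)) (at x)"
    and hess: "\<And>i x. i < n \<Longrightarrow> (grad i has_derivative (\<lambda>v. hess i x *v v)) (at x)"
    and strong: "strongly_convex \<mu> (\<lambda>x. (1 / real n) * (\<Sum>i<n. f i x))"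
    and xstar_min: "\<And>y. (1 / real n) * (\<Sum>i<n. f i xstar) \<le> (1 / real n) * (\<Sum>i<n. f i y)"
    and basis: "\<And>i. i < n \<Longrightarrow> is_mat_basis (B i)"
    and consts_pos: "H > 0" "M\<^sub>1 > 0" "M\<^sub>2 > 0" "R > 0"
    and Lip_H: "\<And>i x y. i < n \<Longrightarrow> spec_norm (hess i x - hess i y) \<le> H * norm (x - y)"
    and Lip_H1: "\<And>i x y. i < n \<Longrightarrow> frob (hess i x - hess i y) \<le> H\<^sub>1 * norm (x - y)"
    and Lip_M1: "\<And>i x y. i < n \<Longrightarrow>
                   frob (coeff (B i) (hess i x) - coeff (B i) (hess i y)) \<le> M\<^sub>1 * norm (x - y)"
    and Lip_M2: "\<And>i x y j l. i < n \<Longrightarrow>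
                   \<bar>coeff (B i) (hess i x) $ j $ l - coeff (B i) (hess i y) $ j $ l\<bar> \<le> M\<^sub>2 * norm (x - y)"
    and basis_R: "\<And>i j l. i < n \<Longrightarrow> frob (B i j l) \<le> R"
  shows
   "(\<forall>\<alpha> \<eta> p \<omega>\<^sub>M Q C x z w L \<xi> g.
       0 \<le> \<alpha> \<and> 0 < p \<and> p \<le> 1 \<and>
       (\<forall>k. unbiased_compressor \<omega>\<^sub>M (Q k)) \<and> 0 < \<eta> \<and> \<eta> \<le> 1 / (\<omega>\<^sub>M + 1) \<and>
       BL1_run n B grad hess \<mu> \<alpha> \<eta> p Q C x z w L \<xi> g \<and>
       (\<forall>j k. convex_comb_of (z k $ j) k (\<lambda>t. x t $ j)) \<and>
       (\<forall>i j l k. i < n \<longrightarrow>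
          convex_comb_of (L k i $ j $ l) k (\<lambda>t. coeff (B i) (hess i (z t)) $ j $ l)) \<and>
       (norm (x 0 - xstar))^2 \<le> min (\<mu>^2 / (4 * real CARD('d)^2 * H^2))
                                     (\<mu>^2 / (16 * real CARD('d)^4 * N_B n B * R^2 * M\<^sub>2^2))
     \<longrightarrow> (\<forall>k. (norm (z k - xstar))^2 \<le> real CARD('d) *
                   min (\<mu>^2 / (4 * real CARD('d)^2 * H^2))
                       (\<mu>^2 / (16 * real CARD('d)^4 * N_B n B * R^2 * M\<^sub>2^2))
              \<and> Hcal n (L k) (\<lambda>i. coeff (B i) (hess i xstar))
                  \<le> \<mu>^2 / (16 * real CARD('d) * N_B n B * R^2)))
    \<and>
    (\<forall>p \<delta>\<^sub>M \<delta> Q C x z w L \<xi> g.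
       0 < p \<and> p \<le> 1 \<and>
       (\<forall>k. deterministic (Q k) \<and> contraction_vec \<delta>\<^sub>M (Q k)) \<and>
       (\<forall>k i. i < n \<longrightarrow> deterministic (C k i) \<and> contraction_mat \<delta> (C k i)) \<and>
       BL1_run n B grad hess \<mu> 1 1 p Q C x z w L \<xi> g \<and>
       (norm (z 0 - xstar))^2 \<le>
          min ((\<delta>\<^sub>M / 4) * \<mu>^2 / (4 * H^2 * (6 / \<delta>\<^sub>M - 7 / 2)))
              ((\<delta> / 4) * (\<delta>\<^sub>M / 4) * \<mu>^2 /
                 (16 * N_B n B * R^2 * (6 / \<delta>\<^sub>M - 7 / 2) * (6 / \<delta> - 7 / 2) * M\<^sub>1^2)) \<and>
       Hcal n (L 0) (\<lambda>i. coeff (B i) (hess i xstar))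
          \<le> (\<delta>\<^sub>M / 4) * \<mu>^2 / (16 * N_B n B * R^2 * (6 / \<delta>\<^sub>M - 7 / 2))
     \<longrightarrow> (\<forall>k. (norm (z k - xstar))^2 \<le>
                 min ((\<delta>\<^sub>M / 4) * \<mu>^2 / (4 * H^2 * (6 / \<delta>\<^sub>M - 7 / 2)))
                     ((\<delta> / 4) * (\<delta>\<^sub>M / 4) * \<mu>^2 /
                        (16 * N_B n B * R^2 * (6 / \<delta>\<^sub>M - 7 / 2) * (6 / \<delta> - 7 / 2) * M\<^sub>1^2))
              \<and> Hcal n (L k) (\<lambda>i. coeff (B i) (hess i xstar))
                  \<le> (\<delta>\<^sub>M / 4) * \<mu>^2 / (16 * N_B n B * R^2 * (6 / \<delta>\<^sub>M - 7 / 2))))"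
proof -
  interpret BL1_problem n f grad hess B H M\<^sub>1 M\<^sub>2 R \<mu> xstar
    using n_pos grad hess Lip_H consts_pos strong xstar_min mu_pos basis basis_R Lip_M1 Lip_M2
    by unfold_locales (simp_all add: avg_fun_def[abs_def])
  have ratio_eqs:
    "\<And>\<delta>\<^sub>M. (\<delta>\<^sub>M / 4) * \<mu>^2 / (4 * H^2 * (6 / \<delta>\<^sub>M - 7 / 2)) = contr_ratio \<delta>\<^sub>M * \<mu>^2 / (4 * H^2)"
    "\<And>\<delta>\<^sub>M. (\<delta>\<^sub>M / 4) * \<mu>^2 / (16 * N_B n B * R^2 * (6 / \<delta>\<^sub>M - 7 / 2))
       = contr_ratio \<delta>\<^sub>M * \<mu>^2 / (16 * N_B n B * R^2)"
    "\<And>\<delta> \<delta>\<^sub>M. (\<delta> / 4) * (\<delta>\<^sub>M / 4) * \<mu>^2 /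
         (16 * N_B n B * R^2 * (6 / \<delta>\<^sub>M - 7 / 2) * (6 / \<delta> - 7 / 2) * M\<^sub>1^2)
       = contr_ratio \<delta> * (contr_ratio \<delta>\<^sub>M * \<mu>^2 / (16 * N_B n B * R^2)) / M\<^sub>1^2"
    unfolding contr_ratio_def by (simp_all only: divide_inverse inverse_mult_distrib mult_ac)
  note bounded =
    BL1_bounded_of_convex_combinations[OF min.cobounded1 min.cobounded2]
    BL1_bounded_of_contractions[OF order_refl min.cobounded1 min.cobounded2]
  show ?thesis
    unfolding ratio_eqs
    by (intro conjI allI impI; elim conjE;
        rule bounded[THEN conjunct1] bounded[THEN conjunct2]; assumption)
qed

end
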